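(* Let $\langle\mathcal{P},\mathcal{S}\rangle$ be an ADP problem with $\mathcal{P}=\mathcal{P}'\uplus\{\alpha\}$ for $\alpha=\ell\to\{p_1:r_1,\dots,p_k:r_k\}^m$, let $1\le j\le k$, and let $t\trianglelefteq_\sharp r_j$. Let $\delta_1,\dots,\delta_d$ be all narrowing substitutions of $t$. Then $\mathrm{Proc}_{\mathtt{ROI}}(\langle\mathcal{P},\mathcal{S}\rangle)=(\mathrm{Pol}_0,\{\langle\mathcal{P}'\cup N,\widetilde{\mathcal{S}}\rangle\})$ is sound, where \[N=\{\ell\delta_e\to\{p_1:r_1\delta_e,\dots,p_k:r_k\delta_e\}^m\mid1\le e\le d\}\cup\{\ell\to\{p_1:\sharp_{\mathrm{capt}_1(\delta_1,\dots,\delta_d)}(r_1),\dots,p_k:\sharp_{\mathrm{capt}_k(\delta_1,\dots,\delta_d)}(r_k)\}^m\}\] and $\widetilde{\mathcal{S}}=(\mathcal{S}\setminus\{\alpha\})\cup N$ if $\alpha\in\mathcal{S}$, and $\widetilde{\mathcal{S}}=\mathcal{S}$ otherwise.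
   Context: Annotated dependency pairs (ADPs): over a finite signature $\Sigma$ with fresh annotated copies $f^\sharp$ of the defined symbols, an ADP is $\ell\to\{p_1:r_1,\dots,p_k:r_k\}^m$ with $\ell$ a non-variable unannotated term, $r_j$ possibly annotated, $\mathcal{V}(r_j)\subseteq\mathcal{V}(\ell)$, $0<p_j\le1$, $\sum p_j=1$, flag $m\in\{\mathsf{true},\mathsf{false}\}$. For a set $\mathcal{P}$, defined symbols are roots of left-hand sides; basic terms are $f(t_1,\dots,t_k)$ with $f$ defined, $t_i$ free of defined symbols; $|t|$ term size; $\flat$ removes annotations; $t^\sharp$ annotates the root; $\sharp_\Phi(t)$ annotates exactly the positions in $\Phi$ and removes all other annotations; $\flat^\uparrow_\pi$ removes annotations strictly above $\pi$; $t\trianglelefteq_\sharp^\pi s$ means $s$ has an annotated symbol at $\pi$ and $t=\flat(s|_\pi)$, and $t\trianglelefteq_\sharp s$ means this holds for some $\pi$. Rewriting with $\mathcal{P}$ (innermost): at a position $\pi$ with defined or annotated symbol, ADP $\ell\to\{p_j:r_j\}^m\in\mathcal{P}$, $\sigma$ with $\flat(s|_\pi)=\ell\sigma$ whose proper subterms are normal forms: $t_j=s[r_j\sigma]_\pi$ (at: $m=\mathsf{true}$, $\pi$ annotated), $s[\flat(r_j)\sigma]_\pi$ (nt), $\flat^\uparrow_\pi(s[r_j\sigma]_\pi)$ (af), $\flat^\uparrow_\pi(s[\flat(r_j)\sigma]_\pi)$ (nf). A term is in argument normal form w.r.t. $\mathcal{P}$ if all its proper subterms are normal forms. $\mathcal{P}$-chain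 trees: possibly infinite finitely-branching trees with nodes $(p_v:t_v)$, root probability 1, $t_v$ rewriting to $\{\tfrac{p_w}{p_v}:t_w\}_w$ at inner nodes. For $\mathcal{S}\subseteq\mathcal{P}$, $\operatorname{edl}_{\langle\mathcal{P},\mathcal{S}\rangle}(\mathfrak{T})$ sums $p_v$ over inner nodes rewritten by (at)/(af)-steps with ADPs in $\mathcal{S}$; $\operatorname{edh}_{\langle\mathcal{P},\mathcal{S}\rangle}(t)$ = sup over chain trees rooted at $t^\sharp$; $\iota_{\langle\mathcal{P},\mathcal{S}\rangle}=\iota(n\mapsto\sup\{\operatorname{edh}_{\langle\mathcal{P},\mathcal{S}\rangle}(t)\mid t\text{ basic},|t|\le n\})$; complexities $\mathfrak{C}=\{\mathrm{Pol}_0,\mathrm{Pol}_1,\dots,\mathrm{Exp},\mathrm{2\text{-}Exp},\mathrm{Fin},\omega\}$ ordered in that order, $\oplus$ = maximum, $\iota(f)=\mathrm{Pol}_a$ for least $a$ with $f\in O(n^a)$, else $\mathrm{Exp}$ if $f\in O(2^{\mathrm{pol}(n)})$, else $\mathrm{2\text{-}Exp}$ if $f\in O(2^{2^{\mathrm{pol}(n)}})$, else $\mathrm{Fin}$ if $f$ never equals $\omega$, else $\omega$. Narrowing substitutions: for the ADP $\alpha$ with left-hand side $\ell$ and a term $t\trianglelefteq_\sharp r_j$, a substitution $\delta$ is a narrowing substitution of $t$ if there is a non-variable position $\tau$ of $t$ and a variable-renamed ADP $\ell'\to\dots\in\mathcal{P}$ such that $\delta$ is a most general unifier of $t|_\tau$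 and $\ell'$ and both $\ell\delta$ and $\ell'\delta$ are in argument normal form w.r.t. $\mathcal{P}$. A term $t'$ is captured by $\delta_1,\dots,\delta_d$ if for every narrowing substitution $\rho$ of $t'$ there is $1\le e\le d$ and a substitution $\rho'$ with $\rho=\delta_e\rho'$. For $1\le i\le k$, $\mathrm{capt}_i(\delta_1,\dots,\delta_d)$ is the set of all positions $\pi$ with $t'\trianglelefteq_\sharp^\pi r_i$ for some $t'$ that is not captured by $\delta_1,\dots,\delta_d$. ADP problems, proof trees, soundness: ADP problem $\langle\mathcal{P},\mathcal{S}\rangle$, $\mathcal{P}$ finite, $\mathcal{S}\subseteq\mathcal{P}$, solved iff $\mathcal{S}=\emptyset$. A processor maps an ADP problem to $(c,\{\langle\mathcal{P}_1,\mathcal{S}_1\rangle,\dots,\langle\mathcal{P}_n,\mathcal{S}_n\rangle\})$. A proof tree is a finite tree with labels $L_{\mathcal{A}}$ (ADP problems), $L_{\mathcal{C}}$ (complexities) where each inner node and its children arise by a processor application and leaves carry $\mathrm{Pol}_0$ if solved, $\omega$ otherwise; it is well formed if for each node $v$ with $L_{\mathcal{A}}(v)=\langle\mathcal{P},\mathcal{S}\rangle$ and root path $v_1,\dots,v_k=v$: $\iota_{\langle\mathcal{P},\mathcal{S}\rangle}\sqsubseteq L_{\mathcal{C}}(v_1)\oplus\dots\oplus L_{\mathcal{C}}(v_{k-1})\oplus\max\{L'_{\mathcal{C}}(w)\mid w$ reachable from $v$, incl. $v\}$ and $\iota_{\langle\mathcal{P},\mathcal{P}\setminus\mathcal{S}\rangle}\sqsubseteq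 L_{\mathcal{C}}(v_1)\oplus\dots\oplus L_{\mathcal{C}}(v_{k-1})$ ($L'_{\mathcal{C}}=L_{\mathcal{C}}$ on inner nodes, $\iota_{L_{\mathcal{A}}(w)}$ on leaves). A processor with output $(c,\{\langle\mathcal{P}_i,\mathcal{S}_i\rangle\}_{i\le n})$ on $\langle\mathcal{P},\mathcal{S}\rangle$ is sound if for every well-formed proof tree and node $v$ labeled $\langle\mathcal{P},\mathcal{S}\rangle$ with root path $v_1,\dots,v_k=v$: $\iota_{\langle\mathcal{P},\mathcal{S}\rangle}\sqsubseteq L_{\mathcal{C}}(v_1)\oplus\dots\oplus L_{\mathcal{C}}(v_{k-1})\oplus c\oplus\iota_{\langle\mathcal{P}_1,\mathcal{S}_1\rangle}\oplus\dots\oplus\iota_{\langle\mathcal{P}_n,\mathcal{S}_n\rangle}$ and $\iota_{\langle\mathcal{P}_i,\mathcal{P}_i\setminus\mathcal{S}_i\rangle}\sqsubseteq L_{\mathcal{C}}(v_1)\oplus\dots\oplus L_{\mathcal{C}}(v_{k-1})\oplus c$ for all $i$. *)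

theory Defs
  imports "HOL-Analysis.Infinite_Sum" "HOL-Library.Extended_Nonnegative_Real"
begin

text \<open>The boolean flag of a
function node says whether the symbol is annotated (f versus f-sharp). The arity of
a symbol occurrence is the length of its argument list; the signature is a set of
pairs (symbol, arity).\<close>

datatype ('f, 'v) trm = TVar 'v | TFun 'f bool "('f, 'v) trm list"

fun flat :: "('f, 'v) trm \<Rightarrow> ('f, 'v) trm" where
  "flat (TVar x) = TVar x"
| "flat (TFun f b ts) = TFun f False (map flat ts)"

fun subst :: "('v \<Rightarrow> ('f, 'v) trm) \<Rightarrow> ('f, 'v) trm \<Rightarrow> ('f, 'v) trm" where
  "subst \<sigma> (TVar x) = \<sigma> x"
| "subst \<sigma> (TFun f b ts) = TFun f b (map (subst \<sigma>) ts)"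

fun vars :: "('f, 'v) trm \<Rightarrow> 'v set" where
  "vars (TVar x) = {x}"
| "vars (TFun f b ts) = \<Union> (set (map vars ts))"

fun funas :: "('f, 'v) trm \<Rightarrow> ('f \<times> nat) set" where
  "funas (TVar x) = {}"
| "funas (TFun f b ts) = insert (f, length ts) (\<Union> (set (map funas ts)))"

fun ann_funas :: "('f, 'v) trm \<Rightarrow> ('f \<times> nat) set" where
  "ann_funas (TVar x) = {}"
| "ann_funas (TFun f b ts) = (if b then {(f, length ts)} else {}) \<union> \<Union> (set (map ann_funas ts))"

fun tsize :: "('f, 'v) trm \<Rightarrow> nat" where
  "tsize (TVar x) = 1"
| "tsize (TFun f b ts) = 1 + sum_list (map tsize ts)"

definition unannotated :: "('f, 'v) trm \<Rightarrow> bool" where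
  "unannotated t \<longleftrightarrow> flat t = t"

definition is_TFun :: "('f, 'v) trm \<Rightarrow> bool" where
  "is_TFun t \<longleftrightarrow> (\<exists>f b ts. t = TFun f b ts)"

fun sharp :: "('f, 'v) trm \<Rightarrow> ('f, 'v) trm" where
  "sharp (TVar x) = TVar x"
| "sharp (TFun f b ts) = TFun f True ts"

type_synonym pos = "nat list"

fun valid_pos :: "('f, 'v) trm \<Rightarrow> pos \<Rightarrow> bool" where
  "valid_pos t [] = True"
| "valid_pos (TVar x) (i # p) = False"
| "valid_pos (TFun f b ts) (i # p) = (i < length ts \<and> valid_pos (ts ! i) p)"

definition poss :: "('f, 'v) trm \<Rightarrow> pos set" where
  "poss t = {p. valid_pos t p}"

fun subt_at :: "('f, 'v) trm \<Rightarrow> pos \<Rightarrow> ('f, 'v) trm" where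
  "subt_at t [] = t"
| "subt_at (TVar x) (i # p) = TVar x"
| "subt_at (TFun f b ts) (i # p) = subt_at (ts ! i) p"

fun replace_at :: "('f, 'v) trm \<Rightarrow> pos \<Rightarrow> ('f, 'v) trm \<Rightarrow> ('f, 'v) trm" where
  "replace_at t [] u = u"
| "replace_at (TVar x) (i # p) u = TVar x"
| "replace_at (TFun f b ts) (i # p) u = TFun f b (ts[i := replace_at (ts ! i) p u])"

fun flat_above :: "('f, 'v) trm \<Rightarrow> pos \<Rightarrow> ('f, 'v) trm" where
  "flat_above t [] = t"
| "flat_above (TVar x) (i # p) = TVar x"
| "flat_above (TFun f b ts) (i # p) = TFun f False (ts[i := flat_above (ts ! i) p])"

definition ann_at :: "('f, 'v) trm \<Rightarrow> pos \<Rightarrow> bool" where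
  "ann_at t p \<longleftrightarrow> p \<in> poss t \<and> (\<exists>f ts. subt_at t p = TFun f True ts)"

function sharp_pos_aux :: "pos set \<Rightarrow> pos \<Rightarrow> ('f, 'v) trm \<Rightarrow> ('f, 'v) trm" where
  "sharp_pos_aux \<Phi> p (TVar x) = TVar x"
| "sharp_pos_aux \<Phi> p (TFun f b ts) =
     TFun f (p \<in> \<Phi>) (map (\<lambda>(i, t). sharp_pos_aux \<Phi> (p @ [i]) t) (zip [0..<length ts] ts))"
  by pat_completeness auto
termination
  by (relation "measure (\<lambda>(\<Phi>, p, t). size t)")
     (auto dest!: set_zip_rightD intro!: size_list_estimation' simp: less_Suc_eq_le)

definition sharp_pos :: "pos set \<Rightarrow> ('f, 'v) trm \<Rightarrow> ('f, 'v) trm" where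
  "sharp_pos \<Phi> t = sharp_pos_aux \<Phi> [] t"

definition ann_subterm_at :: "('f, 'v) trm \<Rightarrow> pos \<Rightarrow> ('f, 'v) trm \<Rightarrow> bool" where
  "ann_subterm_at t p s \<longleftrightarrow> ann_at s p \<and> t = flat (subt_at s p)"

definition ann_subterm :: "('f, 'v) trm \<Rightarrow> ('f, 'v) trm \<Rightarrow> bool" where
  "ann_subterm t s \<longleftrightarrow> (\<exists>p. ann_subterm_at t p s)"

text \<open>An ADP  l -> {p1:r1, ..., pk:rk}^m  is represented as (l, [(p1,r1),...,(pk,rk)], m).\<close>
type_synonym ('f, 'v) adp = "('f, 'v) trm \<times> (real \<times> ('f, 'v) trm) list \<times> bool"

definition adp_lhs :: "('f, 'v) adp \<Rightarrow> ('f, 'v) trm" where "adp_lhs a = fst a"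
definition adp_rhs :: "('f, 'v) adp \<Rightarrow> (real \<times> ('f, 'v) trm) list" where "adp_rhs a = fst (snd a)"
definition adp_flag :: "('f, 'v) adp \<Rightarrow> bool" where "adp_flag a = snd (snd a)"

definition wf_adp :: "('f \<times> nat) set \<Rightarrow> ('f, 'v) adp \<Rightarrow> bool" where
  "wf_adp F a \<longleftrightarrow>
     is_TFun (adp_lhs a) \<and> unannotated (adp_lhs a) \<and> funas (adp_lhs a) \<subseteq> F \<and>
     adp_rhs a \<noteq> [] \<and>
     (\<forall>(p, r) \<in> set (adp_rhs a). 0 < p \<and> p \<le> 1 \<and> funas r \<subseteq> F \<and> vars r \<subseteq> vars (adp_lhs a)) \<and>
     sum_list (map fst (adp_rhs a)) = 1"

definition defined :: "('f, 'v) adp set \<Rightarrow> ('f \<times> nat) set" where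
  "defined P = {(f, length ts) | f b ts. \<exists>a \<in> P. adp_lhs a = TFun f b ts}"

type_synonym ('f, 'v) adp_problem = "('f, 'v) adp set \<times> ('f, 'v) adp set"

definition wf_problem :: "('f \<times> nat) set \<Rightarrow> ('f, 'v) adp_problem \<Rightarrow> bool" where
  "wf_problem F PS \<longleftrightarrow> (case PS of (P, S) \<Rightarrow>
     finite P \<and> S \<subseteq> P \<and> (\<forall>a \<in> P. wf_adp F a \<and>
       (\<forall>(p, r) \<in> set (adp_rhs a). ann_funas r \<subseteq> defined P)))"

text \<open>normal forms w.r.t. P: no subterm (of the unannotated term) is an instance of a
  left-hand side (equivalently, no innermost rewrite step with P is possible)\<close>
definition NF :: "('f, 'v) adp set \<Rightarrow> ('f, 'v) trm \<Rightarrow> bool" where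
  "NF P s \<longleftrightarrow> (\<forall>p \<in> poss s. \<forall>a \<in> P. \<forall>\<sigma>. flat (subt_at s p) \<noteq> subst \<sigma> (adp_lhs a))"

definition arg_NF :: "('f, 'v) adp set \<Rightarrow> ('f, 'v) trm \<Rightarrow> bool" where
  "arg_NF P s \<longleftrightarrow> (\<forall>p \<in> poss s. p \<noteq> [] \<longrightarrow> NF P (subt_at s p))"

text \<open>result of one step at position pi in s with substitution sigma and flag m,
  for right-hand side r: cases (at), (nt), (af), (nf)\<close>
definition step_result ::
  "('f, 'v) trm \<Rightarrow> pos \<Rightarrow> ('v \<Rightarrow> ('f, 'v) trm) \<Rightarrow> bool \<Rightarrow> ('f, 'v) trm \<Rightarrow> ('f, 'v) trm" where
  "step_result s \<pi> \<sigma> m r =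
     (let r' = (if ann_at s \<pi> then r else flat r);
          u = replace_at s \<pi> (subst \<sigma> r')
      in if m then u else flat_above u \<pi>)"

definition adp_step ::
  "('f, 'v) adp set \<Rightarrow> ('f, 'v) trm \<Rightarrow> ('f, 'v) adp \<Rightarrow> pos \<Rightarrow> (real \<times> ('f, 'v) trm) list \<Rightarrow> bool" where
  "adp_step P s a \<pi> \<mu> \<longleftrightarrow> a \<in> P \<and> \<pi> \<in> poss s \<and>
     (\<exists>\<sigma>. flat (subt_at s \<pi>) = subst \<sigma> (adp_lhs a) \<and> arg_NF P (subst \<sigma> (adp_lhs a)) \<and>
          \<mu> = map (\<lambda>(p, r). (p, step_result s \<pi> \<sigma> (adp_flag a) r)) (adp_rhs a))"

section \<open>Chain trees\<close>

text \<open>A chain tree: node set V (prefix closed, root []), probabilities, terms, and for each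
  inner node the ADP and position used for its rewrite step.\<close>
type_synonym ('f, 'v) ctree =
  "pos set \<times> (pos \<Rightarrow> real) \<times> (pos \<Rightarrow> ('f, 'v) trm) \<times> (pos \<Rightarrow> ('f, 'v) adp \<times> pos)"

definition ct_nodes :: "('f, 'v) ctree \<Rightarrow> pos set" where "ct_nodes T = fst T"
definition ct_prob :: "('f, 'v) ctree \<Rightarrow> pos \<Rightarrow> real" where "ct_prob T = fst (snd T)"
definition ct_term :: "('f, 'v) ctree \<Rightarrow> pos \<Rightarrow> ('f, 'v) trm" where "ct_term T = fst (snd (snd T))"
definition ct_step :: "('f, 'v) ctree \<Rightarrow> pos \<Rightarrow> ('f, 'v) adp \<times> pos" where "ct_step T = snd (snd (snd T))"

definition ct_inner :: "('f, 'v) ctree \<Rightarrow> pos \<Rightarrow> bool" where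
  "ct_inner T v \<longleftrightarrow> v \<in> ct_nodes T \<and> (\<exists>i. v @ [i] \<in> ct_nodes T)"

definition chain_tree :: "('f, 'v) adp set \<Rightarrow> ('f, 'v) ctree \<Rightarrow> bool" where
  "chain_tree P T \<longleftrightarrow>
     [] \<in> ct_nodes T \<and> (\<forall>v i. v @ [i] \<in> ct_nodes T \<longrightarrow> v \<in> ct_nodes T) \<and>
     ct_prob T [] = 1 \<and>
     (\<forall>v. ct_inner T v \<longrightarrow>
        (\<exists>\<mu>. adp_step P (ct_term T v) (fst (ct_step T v)) (snd (ct_step T v)) \<mu> \<and>
             (\<forall>i. v @ [i] \<in> ct_nodes T \<longleftrightarrow> i < length \<mu>) \<and>
             (\<forall>i < length \<mu>. ct_prob T (v @ [i]) = ct_prob T v * fst (\<mu> ! i) \<and>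
                              ct_term T (v @ [i]) = snd (\<mu> ! i))))"

text \<open>edl: sum of the probabilities of inner nodes rewritten by an (at)- or (af)-step
  (i.e. at an annotated position) with an ADP from S\<close>
definition edl :: "('f, 'v) adp set \<Rightarrow> ('f, 'v) ctree \<Rightarrow> ennreal" where
  "edl S T = infsum (\<lambda>v. ennreal (ct_prob T v))
     {v. ct_inner T v \<and> fst (ct_step T v) \<in> S \<and> ann_at (ct_term T v) (snd (ct_step T v))}"

definition edh :: "('f, 'v) adp set \<Rightarrow> ('f, 'v) adp set \<Rightarrow> ('f, 'v) trm \<Rightarrow> ennreal" where
  "edh P S t = (SUP T \<in> {T. chain_tree P T \<and> ct_term T [] = sharp t}. edl S T)"

definition basic :: "('f \<times> nat) set \<Rightarrow> ('f, 'v) adp set \<Rightarrow> ('f, 'v) trm \<Rightarrow> bool" where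
  "basic F P t \<longleftrightarrow> unannotated t \<and> funas t \<subseteq> F \<and>
     (\<exists>f ts. t = TFun f False ts \<and> (f, length ts) \<in> defined P \<and>
        (\<forall>u \<in> set ts. funas u \<inter> defined P = {}))"

datatype cplx = Pol nat | Exp | TwoExp | Fin | Omega

fun crank :: "cplx \<Rightarrow> nat" where
  "crank (Pol a) = 0" | "crank Exp = 1" | "crank TwoExp = 2" | "crank Fin = 3" | "crank Omega = 4"

fun cpol :: "cplx \<Rightarrow> nat" where
  "cpol (Pol a) = a" | "cpol _ = 0"

instantiation cplx :: linorder
begin
definition less_eq_cplx :: "cplx \<Rightarrow> cplx \<Rightarrow> bool" where
  "less_eq_cplx x y \<longleftrightarrow> crank x < crank y \<or> (crank x = crank y \<and> cpol x \<le> cpol y)"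
definition less_cplx :: "cplx \<Rightarrow> cplx \<Rightarrow> bool" where
  "less_cplx x y \<longleftrightarrow> x \<le> y \<and> \<not> y \<le> x"
instance
proof
  fix x y z :: cplx
  show "x < y \<longleftrightarrow> x \<le> y \<and> \<not> y \<le> x" by (simp add: less_cplx_def)
  show "x \<le> x" by (simp add: less_eq_cplx_def)
  show "x \<le> y \<Longrightarrow> y \<le> z \<Longrightarrow> x \<le> z" by (auto simp: less_eq_cplx_def)
  show "x \<le> y \<Longrightarrow> y \<le> x \<Longrightarrow> x = y"
    by (cases x; cases y) (auto simp: less_eq_cplx_def)
  show "x \<le> y \<or> y \<le> x" by (auto simp: less_eq_cplx_def)
qed
end

text \<open>the iota operator on functions nat => ennreal (the value top plays the role of omega)\<close>
definition in_Pol :: "(nat \<Rightarrow> ennreal) \<Rightarrow> nat \<Rightarrow> bool" where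
  "in_Pol f a \<longleftrightarrow> (\<exists>c::real. eventually (\<lambda>n. f n \<le> ennreal (c * real n ^ a)) at_top)"

definition in_Exp :: "(nat \<Rightarrow> ennreal) \<Rightarrow> bool" where
  "in_Exp f \<longleftrightarrow> (\<exists>(c::real) (a::nat). eventually (\<lambda>n. f n \<le> ennreal (c * 2 ^ (n ^ a))) at_top)"

definition in_TwoExp :: "(nat \<Rightarrow> ennreal) \<Rightarrow> bool" where
  "in_TwoExp f \<longleftrightarrow> (\<exists>(c::real) (a::nat). eventually (\<lambda>n. f n \<le> ennreal (c * 2 ^ (2 ^ (n ^ a)))) at_top)"

definition iota :: "(nat \<Rightarrow> ennreal) \<Rightarrow> cplx" where
  "iota f = (if \<exists>a. in_Pol f a then Pol (LEAST a. in_Pol f a)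
             else if in_Exp f then Exp
             else if in_TwoExp f then TwoExp
             else if (\<forall>n. f n \<noteq> top) then Fin
             else Omega)"

definition iota_prob :: "('f \<times> nat) set \<Rightarrow> ('f, 'v) adp_problem \<Rightarrow> cplx" where
  "iota_prob F PS = (case PS of (P, S) \<Rightarrow>
     iota (\<lambda>n. SUP t \<in> {t. basic F P t \<and> tsize t \<le> n}. edh P S t))"

text \<open>A proof tree: finite prefix-closed node set, labels L_A (ADP problems) and L_C
  (complexities). Inner nodes arise by some processor application (no further
  constraint); leaves carry Pol 0 if solved and Omega otherwise.\<close>
type_synonym ('f, 'v) ptree = "pos set \<times> (pos \<Rightarrow> ('f, 'v) adp_problem) \<times> (pos \<Rightarrow> cplx)"

definition pt_nodes :: "('f, 'v) ptree \<Rightarrow> pos set" where "pt_nodes T = fst T"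
definition pt_LA :: "('f, 'v) ptree \<Rightarrow> pos \<Rightarrow> ('f, 'v) adp_problem" where "pt_LA T = fst (snd T)"
definition pt_LC :: "('f, 'v) ptree \<Rightarrow> pos \<Rightarrow> cplx" where "pt_LC T = snd (snd T)"

definition pt_leaf :: "('f, 'v) ptree \<Rightarrow> pos \<Rightarrow> bool" where
  "pt_leaf T v \<longleftrightarrow> v \<in> pt_nodes T \<and> (\<forall>i. v @ [i] \<notin> pt_nodes T)"

definition proof_tree :: "('f \<times> nat) set \<Rightarrow> ('f, 'v) ptree \<Rightarrow> bool" where
  "proof_tree F T \<longleftrightarrow> finite (pt_nodes T) \<and> [] \<in> pt_nodes T \<and>
     (\<forall>v i. v @ [i] \<in> pt_nodes T \<longrightarrow> v \<in> pt_nodes T) \<and>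
     (\<forall>v \<in> pt_nodes T. wf_problem F (pt_LA T v)) \<and>
     (\<forall>v. pt_leaf T v \<longrightarrow> pt_LC T v = (if snd (pt_LA T v) = {} then Pol 0 else Omega))"

text \<open>L_C(v_1) + ... + L_C(v_{k-1}) for the root path v_1, ..., v_k = v (empty sum = Pol 0)\<close>
definition pt_anc :: "('f, 'v) ptree \<Rightarrow> pos \<Rightarrow> cplx" where
  "pt_anc T v = Max (insert (Pol 0) ((\<lambda>i. pt_LC T (take i v)) ` {..<length v}))"

definition pt_LC' :: "('f \<times> nat) set \<Rightarrow> ('f, 'v) ptree \<Rightarrow> pos \<Rightarrow> cplx" where
  "pt_LC' F T w = (if pt_leaf T w then iota_prob F (pt_LA T w) else pt_LC T w)"

definition well_formed :: "('f \<times> nat) set \<Rightarrow> ('f, 'v) ptree \<Rightarrow> bool" where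
  "well_formed F T \<longleftrightarrow> (\<forall>v \<in> pt_nodes T. case pt_LA T v of (P, S) \<Rightarrow>
      iota_prob F (P, S) \<le> max (pt_anc T v)
         (Max (pt_LC' F T ` {w \<in> pt_nodes T. \<exists>u. w = v @ u})) \<and>
      iota_prob F (P, P - S) \<le> pt_anc T v)"

definition sound_output ::
  "('f \<times> nat) set \<Rightarrow> ('f, 'v) adp_problem \<Rightarrow> cplx \<Rightarrow> ('f, 'v) adp_problem set \<Rightarrow> bool" where
  "sound_output F PS c Qs \<longleftrightarrow>
     (\<forall>T v. proof_tree F T \<and> well_formed F T \<and> v \<in> pt_nodes T \<and> pt_LA T v = PS \<longrightarrow>
        iota_prob F PS \<le> Max (insert (pt_anc T v) (insert c (iota_prob F ` Qs))) \<and>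
        (\<forall>(Pi, Si) \<in> Qs. iota_prob F (Pi, Pi - Si) \<le> max (pt_anc T v) c))"

section \<open>Narrowing substitutions and the processor ROI\<close>

definition is_mgu :: "('v \<Rightarrow> ('f, 'v) trm) \<Rightarrow> ('f, 'v) trm \<Rightarrow> ('f, 'v) trm \<Rightarrow> bool" where
  "is_mgu \<delta> s u \<longleftrightarrow> subst \<delta> s = subst \<delta> u \<and>
     (\<forall>\<theta>. subst \<theta> s = subst \<theta> u \<longrightarrow> (\<exists>\<mu>. \<theta> = (\<lambda>x. subst \<mu> (\<delta> x))))"

definition narrowing_subst ::
  "('f, 'v) adp set \<Rightarrow> ('f, 'v) trm \<Rightarrow> ('f, 'v) trm \<Rightarrow> ('v \<Rightarrow> ('f, 'v) trm) \<Rightarrow> bool" where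
  "narrowing_subst P l t \<delta> \<longleftrightarrow>
     (\<exists>\<tau> \<in> poss t. is_TFun (subt_at t \<tau>) \<and>
       (\<exists>a \<in> P. \<exists>g :: 'v \<Rightarrow> 'v. inj g \<and>
          (let l' = subst (\<lambda>x. TVar (g x)) (adp_lhs a) in
             vars l' \<inter> vars l = {} \<and> is_mgu \<delta> (subt_at t \<tau>) l' \<and>
             arg_NF P (subst \<delta> l) \<and> arg_NF P (subst \<delta> l'))))"

text \<open>t' is captured by delta_1, ..., delta_d: every narrowing substitution rho of t' is
  of the form delta_e rho' (compared on the variables of l, the only ones that matter)\<close>
definition captured ::
  "('f, 'v) adp set \<Rightarrow> ('f, 'v) trm \<Rightarrow> ('f, 'v) trm \<Rightarrow> ('v \<Rightarrow> ('f, 'v) trm) list \<Rightarrow> bool" where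
  "captured P l t' \<delta>s \<longleftrightarrow> (\<forall>\<rho>. narrowing_subst P l t' \<rho> \<longrightarrow>
     (\<exists>\<delta> \<in> set \<delta>s. \<exists>\<rho>'. \<forall>x \<in> vars l. \<rho> x = subst \<rho>' (\<delta> x)))"

definition capt ::
  "('f, 'v) adp set \<Rightarrow> ('f, 'v) trm \<Rightarrow> ('v \<Rightarrow> ('f, 'v) trm) list \<Rightarrow> ('f, 'v) trm \<Rightarrow> pos set" where
  "capt P l \<delta>s r = {\<pi>. \<exists>t'. ann_subterm_at t' \<pi> r \<and> \<not> captured P l t' \<delta>s}"

definition roi_N ::
  "('f, 'v) adp set \<Rightarrow> ('f, 'v) trm \<Rightarrow> (real \<times> ('f, 'v) trm) list \<Rightarrow> bool \<Rightarrow>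
   ('v \<Rightarrow> ('f, 'v) trm) list \<Rightarrow> ('f, 'v) adp set" where
  "roi_N P l rs m \<delta>s =
     (\<lambda>\<delta>. (subst \<delta> l, map (\<lambda>(p, r). (p, subst \<delta> r)) rs, m)) ` set \<delta>s \<union>
     {(l, map (\<lambda>(p, r). (p, sharp_pos (capt P l \<delta>s r) r)) rs, m)}"

definition roi_S ::
  "('f, 'v) adp set \<Rightarrow> ('f, 'v) adp \<Rightarrow> ('f, 'v) adp set \<Rightarrow> ('f, 'v) adp set" where
  "roi_S S \<alpha> N = (if \<alpha> \<in> S then (S - {\<alpha>}) \<union> N else S)"

end

theory Submission
  imports Defs
begin

(* Every left-hand
   side of the new problem is an instance of one of P and vice versa, so both problems have the
   same normal forms and basic terms.

   A chain tree of P is simulated step by step by one of the new problem on terms that lose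
   annotations only at normal forms: an \<alpha>-step with matcher \<sigma> is replayed by the instance for \<delta>
   if \<sigma> is an instance of \<delta>, and by the reannotated copy otherwise. In the latter case the dropped
   annotations sit at instances of captured subterms of the r\<^sub>i, and these are normal forms, since
   a redex in one of them would yield a narrowing substitution of which \<sigma> is an instance.
   Conversely, a step with an ADP of N is a step with \<alpha>, taken on a term carrying at least the
   same annotations. Both simulations keep the probabilities and map counted steps to counted
   steps, which compares the expected derivation heights in both directions. *)

lemma finite_vars: "finite (vars t)"
  by (induction t) auto

lemma subst_subst: "subst \<rho> (subst \<delta> t) = subst (\<lambda>x. subst \<rho> (\<delta> x)) t"
  by (induction t) auto

lemma subst_cong: "(\<And>x. x \<in> vars t \<Longrightarrow> \<sigma> x = \<tau> x) \<Longrightarrow> subst \<sigma> t = subst \<tau> t"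
  by (induction t) auto

lemma subst_TVar [simp]: "subst TVar t = t"
  by (induction t) (auto simp: map_idI)

lemma vars_subst: "vars (subst \<sigma> t) = (\<Union>x \<in> vars t. vars (\<sigma> x))"
  by (induction t) auto

lemma flat_flat [simp]: "flat (flat t) = flat t"
  by (induction t) auto

lemma vars_flat [simp]: "vars (flat t) = vars t"
  by (induction t) auto

lemma flat_subst: "flat (subst \<sigma> t) = subst (\<lambda>x. flat (\<sigma> x)) (flat t)"
  by (induction t) auto

lemma flat_subst_unannotated:
  "(\<And>x. x \<in> vars t \<Longrightarrow> flat (\<sigma> x) = \<sigma> x) \<Longrightarrow> flat (subst \<sigma> t) = subst \<sigma> (flat t)"
  unfolding flat_subst by (rule subst_cong) simp

lemma unannotated_subst_var:
  assumes "flat (subst \<sigma> t) = subst \<sigma> t" and "x \<in> vars t"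
  shows "flat (\<sigma> x) = \<sigma> x"
  using assms
proof (induction t)
  case (TFun f b ts)
  then obtain u where u: "u \<in> set ts" "x \<in> vars u" by auto
  with TFun.prems(1) have "flat (subst \<sigma> u) = subst \<sigma> u" by (simp add: map_eq_conv)
  with TFun.IH u show ?case by blast
qed simp

lemma unannotated_subst_inv: "flat (subst \<rho> t) = subst \<rho> t \<Longrightarrow> flat t = t"
proof (induction t)
  case (TFun f b ts)
  then have "\<forall>u \<in> set ts. flat u = u" by (auto simp: map_eq_conv)
  with TFun.prems show ?case by (simp add: map_idI)
qed simp

lemma tsize_subst_var_le: "x \<in> vars u \<Longrightarrow> tsize (\<theta> x) \<le> tsize (subst \<theta> u)"
proof (induction u)
  case (TFun f b ts)
  then obtain v where v: "v \<in> set ts" "x \<in> vars v" by auto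
  then have "tsize (\<theta> x) \<le> tsize (subst \<theta> v)" using TFun.IH by blast
  also have "\<dots> \<le> sum_list (map tsize (map (subst \<theta>) ts))"
    using v(1) by (simp add: member_le_sum_list)
  finally show ?case by simp
qed simp

lemma occurs_check:
  assumes "\<theta> x = subst \<theta> w" and "w \<noteq> TVar x"
  shows "x \<notin> vars w"
proof
  assume x: "x \<in> vars w"
  with assms(2) obtain f b ts v where w: "w = TFun f b ts" and v: "v \<in> set ts" "x \<in> vars v"
    by (cases w) auto
  have "tsize (\<theta> x) \<le> tsize (subst \<theta> v)" by (rule tsize_subst_var_le[OF v(2)])
  also have "\<dots> \<le> sum_list (map tsize (map (subst \<theta>) ts))"
    using v(1) by (simp add: member_le_sum_list)
  finally show False using assms(1) w by simp
qed

section \<open>Most general unifiers\<close>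

definition unifiers :: "(('f, 'v) trm \<times> ('f, 'v) trm) list \<Rightarrow> ('v \<Rightarrow> ('f, 'v) trm) set" where
  "unifiers E = {\<sigma>. \<forall>(s, u) \<in> set E. subst \<sigma> s = subst \<sigma> u}"

definition is_mgu_list :: "('v \<Rightarrow> ('f, 'v) trm) \<Rightarrow> (('f, 'v) trm \<times> ('f, 'v) trm) list \<Rightarrow> bool" where
  "is_mgu_list \<sigma> E \<longleftrightarrow> \<sigma> \<in> unifiers E \<and> (\<forall>\<theta> \<in> unifiers E. \<exists>\<mu>. \<theta> = (\<lambda>x. subst \<mu> (\<sigma> x)))"

definition eqs_vars :: "(('f, 'v) trm \<times> ('f, 'v) trm) list \<Rightarrow> 'v set" where
  "eqs_vars E = (\<Union>(s, u) \<in> set E. vars s \<union> vars u)"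

definition eqs_size :: "(('f, 'v) trm \<times> ('f, 'v) trm) list \<Rightarrow> nat" where
  "eqs_size E = (\<Sum>(s, u) \<leftarrow> E. tsize s + tsize u)"

lemma finite_eqs_vars: "finite (eqs_vars E)"
  by (auto simp: eqs_vars_def finite_vars)

lemma unifiers_Cons: "\<sigma> \<in> unifiers ((s, u) # E) \<longleftrightarrow> subst \<sigma> s = subst \<sigma> u \<and> \<sigma> \<in> unifiers E"
  by (simp add: unifiers_def)

lemma is_mgu_list_cong: "unifiers E = unifiers E' \<Longrightarrow> is_mgu_list \<sigma> E = is_mgu_list \<sigma> E'"
  by (simp add: is_mgu_list_def)

lemma unifiers_append: "unifiers (E @ E') = unifiers E \<inter> unifiers E'"
  by (auto simp: unifiers_def)

lemma unifiers_zip: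
  "length ss = length us \<Longrightarrow> \<sigma> \<in> unifiers (zip ss us) \<longleftrightarrow> map (subst \<sigma>) ss = map (subst \<sigma>) us"
  by (induction ss us rule: list_induct2) (simp_all add: unifiers_Cons, simp add: unifiers_def)

lemma unifiers_decompose:
  "length ss = length us \<Longrightarrow> unifiers ((TFun f b ss, TFun f b us) # E) = unifiers (zip ss us @ E)"
  by (auto simp: unifiers_Cons unifiers_append unifiers_zip)

definition eqs_less :: "((('f, 'v) trm \<times> ('f, 'v) trm) list \<times> (('f, 'v) trm \<times> ('f, 'v) trm) list) set" where
  "eqs_less = measures [\<lambda>E. card (eqs_vars E), eqs_size]"

lemma eqs_less_drop: "(E, (TVar x, TVar x) # E) \<in> eqs_less"
proof -
  have "card (eqs_vars E) \<le> card (eqs_vars ((TVar x, TVar x) # E))"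
    by (rule card_mono[OF finite_eqs_vars]) (auto simp: eqs_vars_def)
  then show ?thesis by (auto simp: eqs_less_def eqs_size_def)
qed

lemma eqs_less_decompose:
  assumes "length ss = length us"
  shows "(zip ss us @ E, (TFun f b ss, TFun g c us) # E) \<in> eqs_less"
proof -
  have "eqs_vars (zip ss us @ E) = eqs_vars ((TFun f b ss, TFun g c us) # E)"
    and "eqs_size (zip ss us @ E) < eqs_size ((TFun f b ss, TFun g c us) # E)"
    using assms by (induction ss us rule: list_induct2) (auto simp: eqs_vars_def eqs_size_def)
  then show ?thesis by (simp add: eqs_less_def)
qed

lemma mgu_elim_var:
  fixes x :: 'v and w :: "('f, 'v) trm"
  defines "\<rho> \<equiv> TVar(x := w)"
  assumes x: "x \<notin> vars w"
    and mgu: "is_mgu_list \<sigma>' (map (\<lambda>(a, b). (subst \<rho> a, subst \<rho> b)) E)"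
  shows "is_mgu_list (\<lambda>y. subst \<sigma>' (\<rho> y)) ((TVar x, w) # E)"
proof -
  have elim: "subst \<theta> (subst \<rho> a) = subst \<theta> a" if "\<theta> x = subst \<theta> w" for \<theta> a
    unfolding subst_subst by (rule subst_cong) (simp add: \<rho>_def that)
  have w: "subst \<rho> w = w"
    by (subst subst_TVar[symmetric], rule subst_cong) (use x in \<open>auto simp: \<rho>_def\<close>)
  define \<sigma> where "\<sigma> = (\<lambda>y. subst \<sigma>' (\<rho> y))"
  have "subst \<sigma> w = subst \<sigma>' (subst \<rho> w)" by (simp add: \<sigma>_def subst_subst)
  then have \<sigma>x: "\<sigma> x = subst \<sigma> w" using w by (simp add: \<sigma>_def \<rho>_def)
  have "\<sigma> \<in> unifiers E"
    using mgu by (auto simp: is_mgu_list_def unifiers_def \<sigma>_def subst_subst[symmetric])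
  with \<sigma>x have unif: "\<sigma> \<in> unifiers ((TVar x, w) # E)" by (simp add: unifiers_Cons)
  have "\<exists>\<mu>. \<theta> = (\<lambda>y. subst \<mu> (\<sigma> y))" if \<theta>: "\<theta> \<in> unifiers ((TVar x, w) # E)" for \<theta>
  proof -
    from \<theta> have \<theta>x: "\<theta> x = subst \<theta> w" and "\<theta> \<in> unifiers E" by (simp_all add: unifiers_Cons)
    then have "\<theta> \<in> unifiers (map (\<lambda>(a, b). (subst \<rho> a, subst \<rho> b)) E)"
      by (auto simp: unifiers_def elim)
    with mgu obtain \<mu> where \<mu>: "\<theta> = (\<lambda>y. subst \<mu> (\<sigma>' y))" by (auto simp: is_mgu_list_def)
    have "\<theta> y = subst \<mu> (\<sigma> y)" for y
    proof (cases "y = x")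
      case True
      have "subst \<mu> (\<sigma> x) = subst \<theta> w" by (simp add: \<sigma>_def \<rho>_def \<mu> subst_subst)
      then show ?thesis using True \<theta>x by simp
    qed (simp add: \<sigma>_def \<rho>_def \<mu>)
    then show ?thesis by blast
  qed
  with unif show ?thesis unfolding is_mgu_list_def \<sigma>_def by blast
qed

lemma unifiers_elim_var:
  fixes x :: 'v and w :: "('f, 'v) trm"
  assumes "\<theta> \<in> unifiers ((TVar x, w) # E)"
  shows "\<theta> \<in> unifiers (map (\<lambda>(a, b). (subst (TVar(x := w)) a, subst (TVar(x := w)) b)) E)"
proof -
  have "subst \<theta> (subst (TVar(x := w)) a) = subst \<theta> a" for a
    unfolding subst_subst by (rule subst_cong) (use assms in \<open>simp add: unifiers_Cons\<close>)
  with assms show ?thesis by (auto simp: unifiers_def)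
qed

lemma eqs_less_elim_var:
  fixes x :: 'v and w :: "('f, 'v) trm"
  assumes "x \<notin> vars w" and "eqs_vars ((TVar x, w) # E) = eqs_vars E'"
  shows "(map (\<lambda>(a, b). (subst (TVar(x := w)) a, subst (TVar(x := w)) b)) E, E') \<in> eqs_less"
proof -
  have "vars (subst (TVar(x := w)) a) \<subseteq> (vars a - {x}) \<union> vars w" for a :: "('f, 'v) trm"
    using assms by (auto simp: vars_subst split: if_splits)
  then have "eqs_vars (map (\<lambda>(a, b). (subst (TVar(x := w)) a, subst (TVar(x := w)) b)) E)
      \<subset> eqs_vars ((TVar x, w) # E)"
    using assms by (fastforce simp: eqs_vars_def)
  then have "card (eqs_vars (map (\<lambda>(a, b). (subst (TVar(x := w)) a, subst (TVar(x := w)) b)) E))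
      < card (eqs_vars E')"
    unfolding assms(2) by (rule psubset_card_mono[OF finite_eqs_vars])
  then show ?thesis by (simp add: eqs_less_def)
qed

lemma mgu_list_var:
  fixes E E0 :: "(('f, 'v) trm \<times> ('f, 'v) trm) list"
  assumes IH: "\<And>E'. (E', E) \<in> eqs_less \<Longrightarrow> unifiers E' \<noteq> {} \<Longrightarrow> \<exists>\<sigma>. is_mgu_list \<sigma> E'"
    and unif: "unifiers ((TVar x, w) # E0) \<noteq> {}" and w: "w \<noteq> TVar x"
    and vars: "eqs_vars ((TVar x, w) # E0) = eqs_vars E"
  shows "\<exists>\<sigma>. is_mgu_list \<sigma> ((TVar x, w) # E0)"
proof -
  from unif obtain \<theta> where \<theta>: "\<theta> \<in> unifiers ((TVar x, w) # E0)" by blast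
  then have x: "x \<notin> vars w" using occurs_check w by (fastforce simp: unifiers_Cons)
  from IH[OF eqs_less_elim_var[OF x vars]] unifiers_elim_var[OF \<theta>] obtain \<sigma>'
    where "is_mgu_list \<sigma>' (map (\<lambda>(a, b). (subst (TVar(x := w)) a, subst (TVar(x := w)) b)) E0)"
    by blast
  then show ?thesis using mgu_elim_var[OF x] by blast
qed

lemma mgu_list_reduce:
  assumes IH: "\<And>E'. (E', E) \<in> eqs_less \<Longrightarrow> unifiers E' \<noteq> {} \<Longrightarrow> \<exists>\<sigma>. is_mgu_list \<sigma> E'"
    and "unifiers E \<noteq> {}" and "(E', E) \<in> eqs_less" and unif: "unifiers E = unifiers E'"
  shows "\<exists>\<sigma>. is_mgu_list \<sigma> E"
proof -
  from IH[OF assms(3)] assms(2) unif obtain \<sigma> where "is_mgu_list \<sigma> E'" by auto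
  then show ?thesis using is_mgu_list_cong[OF unif] by blast
qed

lemma mgu_list_step:
  fixes E :: "(('f, 'v) trm \<times> ('f, 'v) trm) list"
  assumes IH: "\<And>E'. (E', E) \<in> eqs_less \<Longrightarrow> unifiers E' \<noteq> {} \<Longrightarrow> \<exists>\<sigma>. is_mgu_list \<sigma> E'"
    and unif: "unifiers E \<noteq> {}"
  shows "\<exists>\<sigma>. is_mgu_list \<sigma> E"
proof (cases E)
  case Nil
  then have "is_mgu_list TVar E" by (simp add: is_mgu_list_def unifiers_def)
  then show ?thesis by blast
next
  case (Cons e E0)
  then obtain s u where E: "E = (s, u) # E0" by (cases e) auto
  consider (trivial) x where "s = TVar x" "u = TVar x"
    | (var_left) x where "s = TVar x" "u \<noteq> TVar x"
    | (var_right) x where "u = TVar x" "\<nexists>y. s = TVar y"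
    | (decompose) f b ss g c us where "s = TFun f b ss" "u = TFun g c us"
    by (cases s; cases u) auto
  then show ?thesis
  proof cases
    case trivial
    have "(E0, E) \<in> eqs_less" using eqs_less_drop by (simp add: E trivial)
    moreover have "unifiers E = unifiers E0" by (auto simp: E trivial unifiers_Cons)
    ultimately show ?thesis using mgu_list_reduce[OF IH unif] by blast
  next
    case var_left
    then show ?thesis using mgu_list_var[OF IH] unif by (simp add: E)
  next
    case var_right
    have "unifiers E = unifiers ((TVar x, s) # E0)" "eqs_vars ((TVar x, s) # E0) = eqs_vars E"
      by (auto simp: E var_right unifiers_def eqs_vars_def)
    with mgu_list_var[OF IH _ _ this(2)] unif var_right(2) show ?thesis
      by (metis is_mgu_list_cong)
  next
    case decompose
    from unif obtain \<theta> where "subst \<theta> s = subst \<theta> u" by (auto simp: E unifiers_Cons)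
    then have fg: "f = g" "b = c" and "map (subst \<theta>) ss = map (subst \<theta>) us"
      by (simp_all add: decompose)
    then have len: "length ss = length us" using map_eq_imp_length_eq by blast
    have "(zip ss us @ E0, E) \<in> eqs_less" using eqs_less_decompose[OF len] by (simp add: E decompose)
    moreover have "unifiers E = unifiers (zip ss us @ E0)"
      using unifiers_decompose[OF len] by (simp add: E decompose fg)
    ultimately show ?thesis using mgu_list_reduce[OF IH unif] by blast
  qed
qed

lemma mgu_list_exists: "unifiers E \<noteq> {} \<Longrightarrow> \<exists>\<sigma>. is_mgu_list \<sigma> E"
proof (induction E rule: wf_induct[of eqs_less])
  show "wf eqs_less" by (simp add: eqs_less_def)
qed (use mgu_list_step in blast)

lemma mgu_exists: "subst \<theta> s = subst \<theta> u \<Longrightarrow> \<exists>\<delta>. is_mgu \<delta> s u"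
  using mgu_list_exists[of "[(s, u)]"] by (auto simp: is_mgu_list_def is_mgu_def unifiers_def)

lemma subt_at_TVar [simp]: "subt_at (TVar x) p = TVar x"
  by (cases p) auto

lemma valid_pos_append: "valid_pos t (p @ q) \<longleftrightarrow> valid_pos t p \<and> valid_pos (subt_at t p) q"
  by (induction p arbitrary: t) (auto elim: valid_pos.elims)

lemma subt_at_append: "subt_at t (p @ q) = subt_at (subt_at t p) q"
proof (induction p arbitrary: t)
  case (Cons i p) then show ?case by (cases t) auto
qed simp

lemma valid_pos_flat [simp]: "valid_pos (flat t) p = valid_pos t p"
proof (induction t arbitrary: p)
  case (TVar x) then show ?case by (cases p) auto
next
  case (TFun f b ts) then show ?case by (cases p) auto
qed

lemma subt_at_flat: "valid_pos t p \<Longrightarrow> subt_at (flat t) p = flat (subt_at t p)"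
proof (induction p arbitrary: t)
  case (Cons i p) then show ?case by (cases t) auto
qed simp

lemma valid_pos_subst: "valid_pos t p \<Longrightarrow> valid_pos (subst \<sigma> t) p"
proof (induction p arbitrary: t)
  case (Cons i p) then show ?case by (cases t) auto
qed simp

lemma subt_at_subst: "valid_pos t p \<Longrightarrow> subt_at (subst \<sigma> t) p = subst \<sigma> (subt_at t p)"
proof (induction p arbitrary: t)
  case (Cons i p) then show ?case by (cases t) auto
qed simp

lemma valid_pos_subst_cases:
  assumes "valid_pos (subst \<sigma> t) p"
  obtains "valid_pos t p" "is_TFun (subt_at t p)"
  | p1 p2 x where "p = p1 @ p2" "valid_pos t p1" "subt_at t p1 = TVar x" "valid_pos (\<sigma> x) p2"
      "subt_at (subst \<sigma> t) p = subt_at (\<sigma> x) p2"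
  using assms
proof (induction p arbitrary: t thesis)
  case Nil then show ?case by (cases t) (auto simp: is_TFun_def)
next
  case (Cons i p)
  show ?case
  proof (cases t)
    case (TVar x)
    then show ?thesis
      using Cons.prems(2,3) by (metis append_Nil subst.simps(1) subt_at.simps(1) valid_pos.simps(1))
  next
    case (TFun f b ts)
    with Cons.prems(3) have i: "i < length ts" and v: "valid_pos (subst \<sigma> (ts ! i)) p" by auto
    show ?thesis
    proof (rule Cons.IH[OF _ _ v])
      show "valid_pos (ts ! i) p \<Longrightarrow> is_TFun (subt_at (ts ! i) p) \<Longrightarrow> thesis"
        using Cons.prems(1) i TFun by simp
      fix p1 p2 x
      assume "p = p1 @ p2" "valid_pos (ts ! i) p1" "subt_at (ts ! i) p1 = TVar x" "valid_pos (\<sigma> x) p2"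
        "subt_at (subst \<sigma> (ts ! i)) p = subt_at (\<sigma> x) p2"
      then show thesis using Cons.prems(2)[of "i # p1" p2 x] i TFun by simp
    qed
  qed
qed

lemma var_pos_exists:
  "x \<in> vars t \<Longrightarrow> \<exists>p. valid_pos t p \<and> subt_at t p = TVar x \<and> (is_TFun t \<longrightarrow> p \<noteq> [])"
proof (induction t)
  case (TVar y) then show ?case by (auto simp: is_TFun_def intro!: exI[of _ "[]"])
next
  case (TFun f b ts)
  then obtain i where i: "i < length ts" "x \<in> vars (ts ! i)" by (auto simp: in_set_conv_nth)
  with TFun.IH obtain p where "valid_pos (ts ! i) p" "subt_at (ts ! i) p = TVar x" by (meson nth_mem)
  with i show ?case by (intro exI[of _ "i # p"]) auto
qed

lemma var_in_vars_subt_at: "valid_pos t p \<Longrightarrow> subt_at t p = TVar x \<Longrightarrow> x \<in> vars t"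
proof (induction p arbitrary: t)
  case (Cons i p) then show ?case by (cases t) (auto, metis nth_mem)
qed simp

lemma vars_subt_at: "valid_pos t p \<Longrightarrow> vars (subt_at t p) \<subseteq> vars t"
proof (induction p arbitrary: t)
  case (Cons i p) then show ?case by (cases t) fastforce+
qed simp

lemma NF_flat [simp]: "NF P (flat s) = NF P s"
  by (auto simp: NF_def poss_def subt_at_flat)

lemma NF_subt_at: "NF P u \<Longrightarrow> valid_pos u q \<Longrightarrow> NF P (subt_at u q)"
  unfolding NF_def poss_def by (metis mem_Collect_eq subt_at_append valid_pos_append)

lemma NF_not_redex: "NF P u \<Longrightarrow> a \<in> P \<Longrightarrow> flat u \<noteq> subst \<sigma> (adp_lhs a)"
  unfolding NF_def poss_def by (metis mem_Collect_eq subt_at.simps(1) valid_pos.simps(1))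

lemma NF_TFun:
  "NF P (TFun f b ts) \<longleftrightarrow>
     (\<forall>t \<in> set ts. NF P t) \<and> (\<forall>a \<in> P. \<forall>\<sigma>. TFun f False (map flat ts) \<noteq> subst \<sigma> (adp_lhs a))"
  (is "?l \<longleftrightarrow> ?r")
proof
  assume l: ?l
  have "NF P (ts ! i)" if "i < length ts" for i using NF_subt_at[OF l, of "[i]"] that by simp
  then show ?r using NF_not_redex[OF l] by (auto simp: in_set_conv_nth)
next
  assume r: ?r
  show ?l unfolding NF_def poss_def
  proof (intro ballI allI)
    fix p a \<sigma> assume p: "p \<in> {p. valid_pos (TFun f b ts) p}" and a: "a \<in> P"
    show "flat (subt_at (TFun f b ts) p) \<noteq> subst \<sigma> (adp_lhs a)"
    proof (cases p)
      case Nil then show ?thesis using r a by simp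
    next
      case (Cons i q)
      with p have "NF P (ts ! i)" "valid_pos (ts ! i) q" using r by auto
      with a Cons show ?thesis by (auto simp: NF_def poss_def)
    qed
  qed
qed

lemma arg_NF_TFun: "arg_NF P (TFun f b ts) \<longleftrightarrow> (\<forall>t \<in> set ts. NF P t)"
proof
  assume l: "arg_NF P (TFun f b ts)"
  have "NF P (ts ! i)" if "i < length ts" for i
    using l that unfolding arg_NF_def poss_def by (metis list.discI mem_Collect_eq subt_at.simps valid_pos.simps(1,3))
  then show "\<forall>t \<in> set ts. NF P t" by (auto simp: in_set_conv_nth)
next
  assume "\<forall>t \<in> set ts. NF P t"
  then have "NF P (subt_at (ts ! i) q)" if "i < length ts" "valid_pos (ts ! i) q" for i q
    using that NF_subt_at nth_mem by blast
  then show "arg_NF P (TFun f b ts)"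
    unfolding arg_NF_def poss_def by (auto elim!: valid_pos.elims[of "TFun f b ts"])
qed

lemma NF_subst_inv: "NF P (subst \<mu> w) \<Longrightarrow> NF P w"
  unfolding NF_def poss_def
proof (intro ballI allI notI)
  fix q a \<sigma>
  assume nf: "\<forall>p \<in> {p. valid_pos (subst \<mu> w) p}. \<forall>a \<in> P. \<forall>\<sigma>.
      flat (subt_at (subst \<mu> w) p) \<noteq> subst \<sigma> (adp_lhs a)"
    and q: "q \<in> {p. valid_pos w p}" and a: "a \<in> P" and eq: "flat (subt_at w q) = subst \<sigma> (adp_lhs a)"
  have "flat (subt_at (subst \<mu> w) q) = subst (\<lambda>x. flat (\<mu> x)) (subst \<sigma> (adp_lhs a))"
    using q by (simp add: subt_at_subst flat_subst eq)
  also have "\<dots> = subst (\<lambda>y. subst (\<lambda>x. flat (\<mu> x)) (\<sigma> y)) (adp_lhs a)" by (simp add: subst_subst)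
  finally show False using nf q a valid_pos_subst by blast
qed

lemma arg_NF_subst_inv: "arg_NF P (subst \<mu> u) \<Longrightarrow> arg_NF P u"
  unfolding arg_NF_def poss_def by (metis NF_subst_inv mem_Collect_eq valid_pos_subst subt_at_subst)

lemma arg_NF_subst_var_NF:
  assumes "arg_NF P (subst \<sigma> l)" and "is_TFun l" and "x \<in> vars l"
  shows "NF P (\<sigma> x)"
proof -
  obtain p where "valid_pos l p" "subt_at l p = TVar x" "p \<noteq> []"
    using var_pos_exists[OF assms(3)] assms(2) by blast
  with assms(1) show ?thesis
    unfolding arg_NF_def poss_def by (metis mem_Collect_eq subst.simps(1) subt_at_subst valid_pos_subst)
qed

lemma not_NF_innermost_redex:
  "\<not> NF P w \<Longrightarrow> \<exists>q a \<sigma>. valid_pos w q \<and> a \<in> P \<and> flat (subt_at w q) = subst \<sigma> (adp_lhs a) \<and>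
       arg_NF P (subst \<sigma> (adp_lhs a))"
proof (induction w)
  case (TVar x)
  then obtain a \<sigma> where "a \<in> P" "TVar x = subst \<sigma> (adp_lhs a)" by (auto simp: NF_def poss_def)
  moreover have "arg_NF P (TVar x)" by (auto simp: arg_NF_def poss_def elim: valid_pos.elims)
  ultimately show ?case by (metis flat.simps(1) subt_at.simps(1) valid_pos.simps(1))
next
  case (TFun f b ts)
  show ?case
  proof (cases "\<forall>t \<in> set ts. NF P t")
    case True
    with TFun.prems obtain a \<sigma> where "a \<in> P" "TFun f False (map flat ts) = subst \<sigma> (adp_lhs a)"
      by (auto simp: NF_TFun)
    moreover have "arg_NF P (TFun f False (map flat ts))" using True by (simp add: arg_NF_TFun)
    ultimately show ?thesis by (metis flat.simps(2) subt_at.simps(1) valid_pos.simps(1))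
  next
    case False
    then obtain i where i: "i < length ts" "\<not> NF P (ts ! i)" by (auto simp: in_set_conv_nth)
    with TFun.IH obtain q a \<sigma> where "valid_pos (ts ! i) q" "a \<in> P"
      "flat (subt_at (ts ! i) q) = subst \<sigma> (adp_lhs a)" "arg_NF P (subst \<sigma> (adp_lhs a))"
      by (meson nth_mem)
    with i show ?thesis by (intro exI[of _ "i # q"] exI[of _ a] exI[of _ \<sigma>]) auto
  qed
qed

section \<open>Captured terms\<close>

lemma inj_renaming_avoiding:
  assumes "infinite (UNIV :: 'v set)" and "finite (A :: 'v set)"
  obtains g :: "'v \<Rightarrow> 'v" where "inj g" and "range g \<inter> A = {}"
proof -
  have "\<exists>g :: 'v \<Rightarrow> 'v. inj g \<and> range g = UNIV - A"
    using assms(2)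
  proof (induction A rule: finite_induct)
    case empty
    show ?case by (rule exI[of _ id]) simp
  next
    case (insert a A)
    from insert.IH obtain g :: "'v \<Rightarrow> 'v" where g: "inj g" "range g = UNIV - A" by blast
    have "infinite (UNIV - A)" by (rule Diff_infinite_finite[OF insert(1) assms(1)])
    from infinite_imp_bij_betw[OF this, of a]
    obtain h where h: "bij_betw h (UNIV - A) (UNIV - A - {a})" ..
    then have "inj_on h (range g)" unfolding g(2) bij_betw_def by (elim conjE)
    then have "inj (h \<circ> g)" using g(1) by (rule comp_inj_on[rotated])
    moreover have "range (h \<circ> g) = UNIV - insert a A"
      using h unfolding image_comp[symmetric] g(2) bij_betw_def by blast
    ultimately show ?case by blast
  qed
  then show ?thesis using that by blast
qed

text \<open>\<sigma> together with the matcher of a renamed left-hand side unifies the subterm with it, so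
  \<sigma> is an instance of the mgu.\<close>

lemma narrowing_subst_of_redex:
  fixes l t :: "('f, 'v) trm"
  assumes inf: "infinite (UNIV :: 'v set)"
    and q: "valid_pos t q" "is_TFun (subt_at t q)"
    and a: "a \<in> P" and redex: "subst \<sigma> (subt_at t q) = subst \<sigma>2 (adp_lhs a)"
    and nf: "arg_NF P (subst \<sigma> l)" "arg_NF P (subst \<sigma>2 (adp_lhs a))"
    and vt: "vars t \<subseteq> vars l"
  shows "\<exists>\<delta> \<mu>. narrowing_subst P l t \<delta> \<and> (\<forall>x \<in> vars l. \<sigma> x = subst \<mu> (\<delta> x))"
proof -
  obtain g :: "'v \<Rightarrow> 'v" where g: "inj g" "range g \<inter> vars l = {}"
    using inj_renaming_avoiding[OF inf finite_vars] by blast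
  define l' where "l' = subst (\<lambda>x. TVar (g x)) (adp_lhs a)"
  define \<theta> where "\<theta> y = (if y \<in> range g then \<sigma>2 (inv g y) else \<sigma> y)" for y
  have \<theta>l: "\<theta> x = \<sigma> x" if "x \<in> vars l" for x
    using that g(2) by (auto simp: \<theta>_def)
  have \<theta>l': "subst \<theta> l' = subst \<sigma>2 (adp_lhs a)"
    unfolding l'_def subst_subst by (rule subst_cong) (simp add: \<theta>_def inv_f_f[OF g(1)])
  have "subst \<theta> (subt_at t q) = subst \<sigma> (subt_at t q)"
    using vars_subt_at[OF q(1)] vt by (intro subst_cong) (auto simp: \<theta>l)
  with redex \<theta>l' have "subst \<theta> (subt_at t q) = subst \<theta> l'" by simp
  then obtain \<delta> where mgu: "is_mgu \<delta> (subt_at t q) l'" using mgu_exists by blast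
  with \<open>subst \<theta> (subt_at t q) = subst \<theta> l'\<close> obtain \<mu> where \<mu>: "\<theta> = (\<lambda>x. subst \<mu> (\<delta> x))"
    unfolding is_mgu_def by blast
  have "subst \<theta> l = subst \<sigma> l" by (rule subst_cong) (simp add: \<theta>l)
  then have "arg_NF P (subst \<delta> l)" using nf(1) arg_NF_subst_inv[of P \<mu>] by (simp add: subst_subst \<mu>)
  moreover have "arg_NF P (subst \<delta> l')" using nf(2) \<theta>l' arg_NF_subst_inv[of P \<mu>] by (simp add: subst_subst \<mu>)
  moreover have "vars l' \<inter> vars l = {}" using g(2) by (auto simp: l'_def vars_subst)
  ultimately have "narrowing_subst P l t \<delta>"
    unfolding narrowing_subst_def Let_def using q a g(1) mgu by (auto simp: poss_def l'_def)
  moreover have "\<forall>x \<in> vars l. \<sigma> x = subst \<mu> (\<delta> x)" using \<theta>l by (simp add: \<mu>)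
  ultimately show ?thesis by blast
qed

text \<open>If \<sigma> is not an instance of any of the \<delta>s, a redex of t\<sigma> cannot lie below a variable of t
  (these are instantiated by normal forms), and at a non-variable position it would yield a
  narrowing substitution of t that is not covered by the \<delta>s.\<close>

lemma captured_subst_NF:
  assumes inf: "infinite (UNIV :: 'v set)"
    and capt: "captured P l t \<delta>s"
    and not_inst: "\<not> (\<exists>\<delta> \<in> set \<delta>s. \<exists>\<rho>. \<forall>x \<in> vars l. \<sigma> x = subst \<rho> (\<delta> x))"
    and nf: "arg_NF P (subst \<sigma> l)" and unann: "flat (subst \<sigma> l) = subst \<sigma> l"
    and l: "is_TFun l" and vt: "vars t \<subseteq> vars l" and t: "flat t = t"
  shows "NF P (subst \<sigma> (t :: ('f, 'v) trm))"
proof (rule ccontr)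
  assume "\<not> NF P (subst \<sigma> t)"
  then obtain q a \<sigma>2 where q: "valid_pos (subst \<sigma> t) q" and a: "a \<in> P"
    and redex: "flat (subt_at (subst \<sigma> t) q) = subst \<sigma>2 (adp_lhs a)"
    and nf2: "arg_NF P (subst \<sigma>2 (adp_lhs a))"
    using not_NF_innermost_redex by blast
  from q show False
  proof (cases rule: valid_pos_subst_cases)
    case 1
    have "flat (subst \<sigma> (subt_at t q)) = subst \<sigma> (flat (subt_at t q))"
      using vars_subt_at[OF 1(1)] vt unannotated_subst_var[OF unann]
      by (intro flat_subst_unannotated) blast
    moreover have "flat (subt_at t q) = subt_at t q" using subt_at_flat[OF 1(1)] t by simp
    ultimately have "flat (subst \<sigma> (subt_at t q)) = subst \<sigma> (subt_at t q)" by simp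
    then have "subst \<sigma> (subt_at t q) = subst \<sigma>2 (adp_lhs a)" using redex 1(1) by (simp add: subt_at_subst)
    from narrowing_subst_of_redex[OF inf 1 a this nf nf2 vt] capt
    obtain \<delta> \<delta>' \<rho>' \<mu> where "\<delta> \<in> set \<delta>s" "\<forall>x \<in> vars l. \<delta>' x = subst \<rho>' (\<delta> x)"
      "\<forall>x \<in> vars l. \<sigma> x = subst \<mu> (\<delta>' x)"
      unfolding captured_def by blast
    then have "\<forall>x \<in> vars l. \<sigma> x = subst (\<lambda>y. subst \<mu> (\<rho>' y)) (\<delta> x)" by (simp add: subst_subst)
    with not_inst \<open>\<delta> \<in> set \<delta>s\<close> show False by blast
  next
    case (2 p1 p2 x)
    have "x \<in> vars l" using var_in_vars_subt_at[OF 2(2,3)] vt by blast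
    then have "NF P (subt_at (\<sigma> x) p2)" using arg_NF_subst_var_NF[OF nf l] NF_subt_at 2(4) by blast
    then show False using NF_not_redex[OF _ a] redex 2(5) by metis
  qed
qed

fun root_ann :: "('f, 'v) trm \<Rightarrow> bool" where
  "root_ann (TVar x) = False"
| "root_ann (TFun f b ts) = b"

lemma ann_at_iff: "ann_at t p \<longleftrightarrow> valid_pos t p \<and> root_ann (subt_at t p)"
  unfolding ann_at_def poss_def by (cases "subt_at t p") auto

lemma root_ann_flat [simp]: "\<not> root_ann (flat u)"
  by (cases u) auto

lemma ann_at_unannotated: "flat t = t \<Longrightarrow> \<not> ann_at t p"
  by (metis ann_at_iff root_ann_flat subt_at_flat)

lemma ann_at_subst:
  "(\<And>x. x \<in> vars w \<Longrightarrow> flat (\<sigma> x) = \<sigma> x) \<Longrightarrow> ann_at (subst \<sigma> w) p \<longleftrightarrow> ann_at w p"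
proof (induction w arbitrary: p)
  case (TVar x)
  then show ?case by (simp add: ann_at_unannotated)
next
  case (TFun f b ts)
  show ?case
  proof (cases p)
    case (Cons i q)
    show ?thesis
    proof (cases "i < length ts")
      case True
      then have "ts ! i \<in> set ts" by simp
      then have "ann_at (subst \<sigma> (ts ! i)) q \<longleftrightarrow> ann_at (ts ! i) q"
        using TFun.prems by (intro TFun.IH) auto
      with Cons True show ?thesis by (simp add: ann_at_iff)
    qed (simp add: Cons ann_at_iff)
  qed (simp add: ann_at_iff)
qed

lemma replace_at_below:
  assumes "valid_pos s \<pi>"
  shows "valid_pos (replace_at s \<pi> u) (\<pi> @ q) = valid_pos u q"
    and "subt_at (replace_at s \<pi> u) (\<pi> @ q) = subt_at u q"
  using assms by (induction \<pi> arbitrary: s) (auto elim: valid_pos.elims)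

lemma replace_at_outside:
  "valid_pos s \<pi> \<Longrightarrow> \<nexists>q. p = \<pi> @ q \<Longrightarrow>
    valid_pos (replace_at s \<pi> u) p = valid_pos s p \<and>
    root_ann (subt_at (replace_at s \<pi> u) p) = root_ann (subt_at s p) \<and>
    ((\<nexists>q. \<pi> = p @ q) \<longrightarrow> subt_at (replace_at s \<pi> u) p = subt_at s p)"
proof (induction \<pi> arbitrary: s p)
  case (Cons i \<pi>)
  then obtain f b ts where s: "s = TFun f b ts" and i: "i < length ts" and v: "valid_pos (ts ! i) \<pi>"
    by (cases s) auto
  show ?case
  proof (cases p)
    case (Cons j p')
    show ?thesis
    proof (cases "j = i")
      case True
      then have "\<nexists>q. p' = \<pi> @ q" using Cons.prems(2) Cons by auto
      from Cons.IH[OF v this] show ?thesis using s i Cons True by auto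
    qed (use s i Cons in auto)
  qed (simp add: s)
qed simp

lemma flat_replace_at: "valid_pos s \<pi> \<Longrightarrow> flat (replace_at s \<pi> u) = replace_at (flat s) \<pi> (flat u)"
proof (induction \<pi> arbitrary: s)
  case (Cons i \<pi>)
  then show ?case by (cases s) (auto simp: map_update)
qed simp

lemma flat_flat_above [simp]: "flat (flat_above s \<pi>) = flat s"
proof (induction \<pi> arbitrary: s)
  case (Cons i \<pi>)
  show ?case
  proof (cases s)
    case (TFun f b ts)
    then show ?thesis using Cons.IH
      by (cases "i < length ts") (simp_all add: map_update list_update_same_conv list_update_beyond)
  qed simp
qed simp

lemma ann_at_flat_above: "ann_at (flat_above s \<pi>) p \<longleftrightarrow> ann_at s p \<and> (\<nexists>q. \<pi> = p @ q \<and> q \<noteq> [])"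
proof (induction \<pi> arbitrary: s p)
  case (Cons i \<pi>)
  show ?case
  proof (cases s)
    case (TFun f b ts)
    show ?thesis
    proof (cases p)
      case (Cons j p')
      show ?thesis
      proof (cases "j = i \<and> i < length ts")
        case True
        then show ?thesis using TFun Cons Cons.IH[of "ts ! i" p'] by (auto simp: ann_at_iff)
      qed (use TFun Cons in \<open>auto simp: ann_at_iff\<close>)
    qed (simp add: TFun ann_at_iff)
  qed (simp add: ann_at_iff)
qed simp

text \<open>For X = (\<lambda>_. False), ann_sim X s s' says that s' carries at least the annotations of s.\<close>

definition ann_sim :: "(('f, 'v) trm \<Rightarrow> bool) \<Rightarrow> ('f, 'v) trm \<Rightarrow> ('f, 'v) trm \<Rightarrow> bool" where
  "ann_sim X s s' \<longleftrightarrow> flat s = flat s' \<and> (\<forall>p. ann_at s p \<and> \<not> ann_at s' p \<longrightarrow> X (subt_at (flat s) p))"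

lemma ann_sim_refl: "ann_sim X s s"
  by (simp add: ann_sim_def)

lemma ann_sim_flat_above: "ann_sim X s s' \<Longrightarrow> ann_sim X (flat_above s \<pi>) (flat_above s' \<pi>)"
  unfolding ann_sim_def by (auto simp: ann_at_flat_above)

lemma ann_sim_replace_at:
  assumes S: "ann_sim X s s'" and v: "valid_pos s \<pi>"
    and above: "\<And>p q. \<pi> = p @ q \<Longrightarrow> q \<noteq> [] \<Longrightarrow> ann_at s p \<Longrightarrow> ann_at s' p"
    and Su: "ann_sim X u u'"
  shows "ann_sim X (replace_at s \<pi> u) (replace_at s' \<pi> u')"
proof -
  have fs: "flat s = flat s'" and fu: "flat u = flat u'" using S Su by (auto simp: ann_sim_def)
  have v': "valid_pos s' \<pi>" using v fs valid_pos_flat by metis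
  have fr: "flat (replace_at s \<pi> u) = replace_at (flat s) \<pi> (flat u)" by (rule flat_replace_at[OF v])
  have "X (subt_at (flat (replace_at s \<pi> u)) p)"
    if a: "ann_at (replace_at s \<pi> u) p" "\<not> ann_at (replace_at s' \<pi> u') p" for p
  proof (cases "\<exists>q. p = \<pi> @ q")
    case True
    then obtain q where p: "p = \<pi> @ q" by blast
    have "ann_at u q" "\<not> ann_at u' q"
      using a replace_at_below[OF v] replace_at_below[OF v'] by (auto simp: ann_at_iff p)
    then have "X (subt_at (flat u) q)" using Su by (auto simp: ann_sim_def)
    then show ?thesis using replace_at_below(2)[of "flat s" \<pi> "flat u" q] v fr p by simp
  next
    case False
    note out = replace_at_outside[OF v False, of u] replace_at_outside[OF v' False, of u']
    have as: "ann_at s p" "\<not> ann_at s' p" using a out by (auto simp: ann_at_iff)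
    show ?thesis
    proof (cases "\<exists>q. \<pi> = p @ q")
      case True
      then obtain q where "\<pi> = p @ q" by blast
      moreover have "q \<noteq> []" using False calculation by auto
      ultimately show ?thesis using above as by blast
    next
      case nP: False
      have "X (subt_at (flat s) p)" using S as by (auto simp: ann_sim_def)
      then show ?thesis using replace_at_outside[of "flat s" \<pi> p "flat u"] v nP False fr by simp
    qed
  qed
  moreover have "flat (replace_at s \<pi> u) = flat (replace_at s' \<pi> u')"
    using fr flat_replace_at[OF v'] fs fu by simp
  ultimately show ?thesis by (simp add: ann_sim_def)
qed

lemma ann_sim_step_result:
  assumes "ann_sim X s s'" and "valid_pos s \<pi>"
    and "\<And>p q. \<pi> = p @ q \<Longrightarrow> q \<noteq> [] \<Longrightarrow> ann_at s p \<Longrightarrow> ann_at s' p"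
    and "ann_sim X (subst \<sigma> (if ann_at s \<pi> then r else flat r))
                   (subst \<sigma>' (if ann_at s' \<pi> then r' else flat r'))"
  shows "ann_sim X (step_result s \<pi> \<sigma> m r) (step_result s' \<pi> \<sigma>' m r')"
proof -
  note R = ann_sim_replace_at[OF assms]
  show ?thesis
  proof (cases m)
    case True then show ?thesis using R by (simp add: step_result_def Let_def)
  next
    case False then show ?thesis using ann_sim_flat_above[OF R] by (simp add: step_result_def Let_def)
  qed
qed

lemma ann_sim_subst:
  assumes un: "\<And>x. x \<in> vars w \<Longrightarrow> flat (\<sigma> x) = \<sigma> x" and fw: "flat w = flat w'"
    and X: "\<And>p. ann_at w p \<Longrightarrow> \<not> ann_at w' p \<Longrightarrow> X (subst \<sigma> (subt_at (flat w) p))"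
  shows "ann_sim X (subst \<sigma> w) (subst \<sigma> w')"
proof -
  have un': "\<And>x. x \<in> vars w' \<Longrightarrow> flat (\<sigma> x) = \<sigma> x" using un fw vars_flat by metis
  have "X (subt_at (flat (subst \<sigma> w)) p)"
    if "ann_at (subst \<sigma> w) p" "\<not> ann_at (subst \<sigma> w') p" for p
  proof -
    have a: "ann_at w p" "\<not> ann_at w' p" using that ann_at_subst[OF un] ann_at_subst[OF un'] by auto
    then have "valid_pos (flat w) p" by (simp add: ann_at_iff)
    then show ?thesis using X[OF a] flat_subst_unannotated[OF un] by (simp add: subt_at_subst)
  qed
  moreover have "flat (subst \<sigma> w) = flat (subst \<sigma> w')"
    using flat_subst_unannotated[OF un] flat_subst_unannotated[OF un'] fw by simp
  ultimately show ?thesis by (simp add: ann_sim_def)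
qed

lemma ann_sim_subst_more_ann:
  assumes "\<And>x. x \<in> vars w \<Longrightarrow> flat (\<sigma> x) = \<sigma> x" and "flat w = flat w'"
    and "\<And>p. ann_at w p \<Longrightarrow> ann_at w' p"
  shows "ann_sim X (subst \<sigma> w) (subst \<sigma> w')"
  using assms by (intro ann_sim_subst) auto

lemma flat_sharp_pos_aux: "flat (sharp_pos_aux \<Phi> p0 r) = flat r"
proof (induction r arbitrary: p0)
  case (TFun f b ts)
  have "map flat (map (\<lambda>(i, t). sharp_pos_aux \<Phi> (p0 @ [i]) t) (zip [0..<length ts] ts)) = map flat ts"
    by (rule nth_equalityI) (auto simp: TFun.IH)
  then show ?case by simp
qed simp

lemma ann_at_sharp_pos_aux:
  "ann_at (sharp_pos_aux \<Phi> p0 r) p \<longleftrightarrow> p0 @ p \<in> \<Phi> \<and> valid_pos r p \<and> is_TFun (subt_at r p)"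
proof (induction r arbitrary: p0 p)
  case (TVar x) then show ?case by (cases p) (auto simp: ann_at_iff is_TFun_def)
next
  case (TFun f b ts)
  show ?case
  proof (cases p)
    case (Cons i p')
    show ?thesis
    proof (cases "i < length ts")
      case True
      then have "ann_at (sharp_pos_aux \<Phi> p0 (TFun f b ts)) (i # p') =
          ann_at (sharp_pos_aux \<Phi> (p0 @ [i]) (ts ! i)) p'"
        by (simp add: ann_at_iff)
      then show ?thesis using TFun.IH[OF nth_mem[OF True], of "p0 @ [i]" p'] True Cons by simp
    qed (simp add: Cons ann_at_iff)
  qed (auto simp: ann_at_iff is_TFun_def)
qed

lemma flat_sharp_pos [simp]: "flat (sharp_pos \<Phi> r) = flat r"
  by (simp add: sharp_pos_def flat_sharp_pos_aux)

lemma vars_sharp_pos [simp]: "vars (sharp_pos \<Phi> r) = vars r"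
  by (metis flat_sharp_pos vars_flat)

lemma ann_at_sharp_pos: "ann_at (sharp_pos \<Phi> r) p \<longleftrightarrow> p \<in> \<Phi> \<and> valid_pos r p \<and> is_TFun (subt_at r p)"
  by (simp add: sharp_pos_def ann_at_sharp_pos_aux)

lemma ann_at_is_TFun: "ann_at r p \<Longrightarrow> valid_pos r p \<and> is_TFun (subt_at r p)"
  unfolding ann_at_def is_TFun_def poss_def by blast

lemma ann_at_sharp_pos_subset: "\<Phi> \<subseteq> {p. ann_at r p} \<Longrightarrow> ann_at (sharp_pos \<Phi> r) p \<longleftrightarrow> p \<in> \<Phi>"
  using ann_at_is_TFun by (auto simp: ann_at_sharp_pos)

section \<open>Simulating chain trees\<close>

definition applicable ::
  "('f, 'v) adp set \<Rightarrow> ('f, 'v) adp \<Rightarrow> ('f, 'v) trm \<Rightarrow> pos \<Rightarrow> ('v \<Rightarrow> ('f, 'v) trm) \<Rightarrow> bool" where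
  "applicable P a s \<pi> \<sigma> \<longleftrightarrow> a \<in> P \<and> \<pi> \<in> poss s \<and> flat (subt_at s \<pi>) = subst \<sigma> (adp_lhs a) \<and>
     arg_NF P (subst \<sigma> (adp_lhs a))"

definition simulating_step ::
  "('f, 'v) adp set \<Rightarrow> ('f, 'v) adp set \<Rightarrow> ('f, 'v) adp set \<Rightarrow> (('f, 'v) trm \<Rightarrow> ('f, 'v) trm \<Rightarrow> bool) \<Rightarrow>
   ('f, 'v) trm \<Rightarrow> ('f, 'v) trm \<Rightarrow> ('f, 'v) adp \<Rightarrow> pos \<Rightarrow> ('v \<Rightarrow> ('f, 'v) trm) \<Rightarrow>
   ('f, 'v) adp \<Rightarrow> ('v \<Rightarrow> ('f, 'v) trm) \<Rightarrow> bool" where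
  "simulating_step P2 S1 S2 R s s' a \<pi> \<sigma> a' \<sigma>' \<longleftrightarrow>
     applicable P2 a' s' \<pi> \<sigma>' \<and> map fst (adp_rhs a') = map fst (adp_rhs a) \<and>
     (\<forall>i < length (adp_rhs a). R (step_result s \<pi> \<sigma> (adp_flag a) (snd (adp_rhs a ! i)))
                                  (step_result s' \<pi> \<sigma>' (adp_flag a') (snd (adp_rhs a' ! i)))) \<and>
     (a \<in> S1 \<and> ann_at s \<pi> \<longrightarrow> a' \<in> S2 \<and> ann_at s' \<pi>)"

lemma chain_tree_inner_step:
  assumes "chain_tree P T" and "ct_inner T v"
  defines "a \<equiv> fst (ct_step T v)" and "\<pi> \<equiv> snd (ct_step T v)"
  shows "\<exists>\<sigma>. applicable P a (ct_term T v) \<pi> \<sigma> \<and>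
    (\<forall>i. v @ [i] \<in> ct_nodes T \<longleftrightarrow> i < length (adp_rhs a)) \<and>
    (\<forall>i < length (adp_rhs a). ct_prob T (v @ [i]) = ct_prob T v * fst (adp_rhs a ! i) \<and>
       ct_term T (v @ [i]) = step_result (ct_term T v) \<pi> \<sigma> (adp_flag a) (snd (adp_rhs a ! i)))"
proof -
  from assms(1,2) obtain \<mu> where st: "adp_step P (ct_term T v) a \<pi> \<mu>"
    and ch: "\<forall>i. v @ [i] \<in> ct_nodes T \<longleftrightarrow> i < length \<mu>"
    and pr: "\<forall>i < length \<mu>. ct_prob T (v @ [i]) = ct_prob T v * fst (\<mu> ! i) \<and> ct_term T (v @ [i]) = snd (\<mu> ! i)"
    unfolding chain_tree_def a_def \<pi>_def by blast
  from st obtain \<sigma> where "applicable P a (ct_term T v) \<pi> \<sigma>"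
    and "\<mu> = map (\<lambda>(p, r). (p, step_result (ct_term T v) \<pi> \<sigma> (adp_flag a) r)) (adp_rhs a)"
    unfolding adp_step_def applicable_def by blast
  with ch pr show ?thesis by (auto simp: case_prod_beta)
qed

lemma chain_tree_relabel:
  assumes ct: "chain_tree P T"
    and steps: "\<And>v. ct_inner T v \<Longrightarrow> \<exists>\<sigma>. applicable P' (a v) (tm v) (snd (ct_step T v)) \<sigma> \<and>
        map fst (adp_rhs (a v)) = map fst (adp_rhs (fst (ct_step T v))) \<and>
        (\<forall>i < length (adp_rhs (a v)). tm (v @ [i]) =
           step_result (tm v) (snd (ct_step T v)) \<sigma> (adp_flag (a v)) (snd (adp_rhs (a v) ! i)))"
  shows "chain_tree P' (ct_nodes T, ct_prob T, tm, \<lambda>v. (a v, snd (ct_step T v)))"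
    (is "chain_tree P' ?T")
  unfolding chain_tree_def
proof (intro conjI allI impI)
  have sel: "ct_nodes ?T = ct_nodes T" "ct_prob ?T = ct_prob T" "ct_term ?T = tm"
    "ct_step ?T = (\<lambda>v. (a v, snd (ct_step T v)))"
    by (simp_all add: ct_nodes_def ct_prob_def ct_term_def ct_step_def)
  show "[] \<in> ct_nodes ?T" "ct_prob ?T [] = 1" "\<And>v i. v @ [i] \<in> ct_nodes ?T \<Longrightarrow> v \<in> ct_nodes ?T"
    using ct by (auto simp: sel chain_tree_def)
  fix v assume "ct_inner ?T v"
  then have inner: "ct_inner T v" by (simp add: ct_inner_def sel)
  from steps[OF inner] obtain \<sigma> where ap: "applicable P' (a v) (tm v) (snd (ct_step T v)) \<sigma>"
    and fst_eq: "map fst (adp_rhs (a v)) = map fst (adp_rhs (fst (ct_step T v)))"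
    and tm: "\<forall>i < length (adp_rhs (a v)). tm (v @ [i]) =
           step_result (tm v) (snd (ct_step T v)) \<sigma> (adp_flag (a v)) (snd (adp_rhs (a v) ! i))"
    by blast
  have len: "length (adp_rhs (a v)) = length (adp_rhs (fst (ct_step T v)))"
    using fst_eq map_eq_imp_length_eq by blast
  have "fst (adp_rhs (a v) ! i) = fst (adp_rhs (fst (ct_step T v)) ! i)"
    if "i < length (adp_rhs (a v))" for i
    using fst_eq that len by (metis nth_map)
  with chain_tree_inner_step[OF ct inner] tm len
  show "\<exists>\<mu>. adp_step P' (ct_term ?T v) (fst (ct_step ?T v)) (snd (ct_step ?T v)) \<mu> \<and>
          (\<forall>i. v @ [i] \<in> ct_nodes ?T \<longleftrightarrow> i < length \<mu>) \<and>
          (\<forall>i < length \<mu>. ct_prob ?T (v @ [i]) = ct_prob ?T v * fst (\<mu> ! i) \<and>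
                           ct_term ?T (v @ [i]) = snd (\<mu> ! i))"
    using ap unfolding sel adp_step_def applicable_def
    by (intro exI[of _ "map (\<lambda>(p, r). (p, step_result (tm v) (snd (ct_step T v)) \<sigma> (adp_flag (a v)) r))
                         (adp_rhs (a v))"]) (auto simp: case_prod_beta)
qed

lemma edl_mono:
  assumes "ct_prob T' = ct_prob T"
    and "\<And>v. ct_inner T v \<Longrightarrow> fst (ct_step T v) \<in> S \<Longrightarrow> ann_at (ct_term T v) (snd (ct_step T v)) \<Longrightarrow>
           ct_inner T' v \<and> fst (ct_step T' v) \<in> S' \<and> ann_at (ct_term T' v) (snd (ct_step T' v))"
  shows "edl S T \<le> edl S' T'"
  unfolding edl_def
  by (rule infsum_mono_neutral[OF nonneg_summable_on_complete nonneg_summable_on_complete])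
    (use assms in auto)

lemma chain_tree_simulating_steps:
  assumes ct: "chain_tree P1 T"
    and sim: "\<And>s s' a \<pi> \<sigma>. R s s' \<Longrightarrow> applicable P1 a s \<pi> \<sigma> \<Longrightarrow>
       \<exists>a' \<sigma>'. simulating_step P2 S1 S2 R s s' a \<pi> \<sigma> a' \<sigma>'"
  obtains \<sigma> c where "\<And>v. ct_inner T v \<Longrightarrow>
      \<forall>i < length (adp_rhs (fst (ct_step T v))). ct_term T (v @ [i]) =
        step_result (ct_term T v) (snd (ct_step T v)) (\<sigma> v) (adp_flag (fst (ct_step T v)))
          (snd (adp_rhs (fst (ct_step T v)) ! i))"
    and "\<And>v s'. ct_inner T v \<Longrightarrow> R (ct_term T v) s' \<Longrightarrow> simulating_step P2 S1 S2 R (ct_term T v) s'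
      (fst (ct_step T v)) (snd (ct_step T v)) (\<sigma> v) (fst (c v s')) (snd (c v s'))"
proof -
  let ?a = "\<lambda>v. fst (ct_step T v)" and ?\<pi> = "\<lambda>v. snd (ct_step T v)"
  have "\<forall>v. \<exists>\<sigma>. ct_inner T v \<longrightarrow> applicable P1 (?a v) (ct_term T v) (?\<pi> v) \<sigma> \<and>
      (\<forall>i < length (adp_rhs (?a v)). ct_term T (v @ [i]) =
         step_result (ct_term T v) (?\<pi> v) \<sigma> (adp_flag (?a v)) (snd (adp_rhs (?a v) ! i)))"
    using chain_tree_inner_step[OF ct] by fastforce
  from choice[OF this] obtain \<sigma> where \<sigma>: "\<And>v. ct_inner T v \<Longrightarrow>
      applicable P1 (?a v) (ct_term T v) (?\<pi> v) (\<sigma> v) \<and>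
      (\<forall>i < length (adp_rhs (?a v)). ct_term T (v @ [i]) =
         step_result (ct_term T v) (?\<pi> v) (\<sigma> v) (adp_flag (?a v)) (snd (adp_rhs (?a v) ! i)))"
    by blast
  define c where "c v s' = (SOME c. simulating_step P2 S1 S2 R (ct_term T v) s' (?a v) (?\<pi> v) (\<sigma> v)
    (fst c) (snd c))" for v s'
  have "simulating_step P2 S1 S2 R (ct_term T v) s' (?a v) (?\<pi> v) (\<sigma> v) (fst (c v s')) (snd (c v s'))"
    if "ct_inner T v" "R (ct_term T v) s'" for v s'
    unfolding c_def by (rule someI_ex) (use sim[OF that(2)] \<sigma>[OF that(1)] in auto)
  with \<sigma> show ?thesis using that by blast
qed

lemma chain_tree_simulation:
  assumes ct: "chain_tree P1 T" and init: "R (ct_term T []) s0"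
    and sim: "\<And>s s' a \<pi> \<sigma>. R s s' \<Longrightarrow> applicable P1 a s \<pi> \<sigma> \<Longrightarrow>
       \<exists>a' \<sigma>'. simulating_step P2 S1 S2 R s s' a \<pi> \<sigma> a' \<sigma>'"
  obtains T' where "chain_tree P2 T'" and "ct_term T' [] = s0" and "edl S1 T \<le> edl S2 T'"
proof -
  let ?\<pi> = "\<lambda>v. snd (ct_step T v)"
  obtain \<sigma> c where \<sigma>: "\<And>v. ct_inner T v \<Longrightarrow>
      \<forall>i < length (adp_rhs (fst (ct_step T v))). ct_term T (v @ [i]) =
        step_result (ct_term T v) (?\<pi> v) (\<sigma> v) (adp_flag (fst (ct_step T v)))
          (snd (adp_rhs (fst (ct_step T v)) ! i))"
    and c: "\<And>v s'. ct_inner T v \<Longrightarrow> R (ct_term T v) s' \<Longrightarrow> simulating_step P2 S1 S2 R (ct_term T v) s'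
      (fst (ct_step T v)) (?\<pi> v) (\<sigma> v) (fst (c v s')) (snd (c v s'))"
    using chain_tree_simulating_steps[OF ct sim] by blast
  \<comment> \<open>the term at node v replays the chosen simulating steps along the path v\<close>
  define tm where "tm v = rec_list s0 (\<lambda>i rv s'. let c' = c (rev rv) s' in
      step_result s' (?\<pi> (rev rv)) (snd c') (adp_flag (fst c')) (snd (adp_rhs (fst c') ! i))) (rev v)" for v
  have tm_snoc: "tm (v @ [i]) = step_result (tm v) (?\<pi> v) (snd (c v (tm v)))
      (adp_flag (fst (c v (tm v)))) (snd (adp_rhs (fst (c v (tm v))) ! i))" for v i
    by (simp add: tm_def Let_def)
  have R_tm: "R (ct_term T v) (tm v)" if "v \<in> ct_nodes T" for v
    using that
  proof (induction v rule: rev_induct)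
    case Nil then show ?case using init by (simp add: tm_def)
  next
    case (snoc i v)
    then have inner: "ct_inner T v" and v: "v \<in> ct_nodes T"
      using ct by (auto simp: ct_inner_def chain_tree_def)
    have "i < length (adp_rhs (fst (ct_step T v)))"
      using chain_tree_inner_step[OF ct inner] snoc.prems by blast
    with c[OF inner snoc.IH[OF v]] \<sigma>[OF inner] show ?case
      by (simp add: simulating_step_def tm_snoc)
  qed
  define T' where "T' = (ct_nodes T, ct_prob T, tm, \<lambda>v. (fst (c v (tm v)), ?\<pi> v))"
  have "chain_tree P2 T'"
    unfolding T'_def using c[OF _ R_tm]
    by (intro chain_tree_relabel[OF ct]) (fastforce simp: simulating_step_def tm_snoc ct_inner_def)
  moreover have "ct_term T' [] = s0" by (simp add: T'_def ct_term_def tm_def)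
  moreover have "edl S1 T \<le> edl S2 T'"
    using c[OF _ R_tm] by (intro edl_mono)
      (auto simp: simulating_step_def T'_def ct_inner_def ct_nodes_def ct_prob_def ct_term_def ct_step_def)
  ultimately show ?thesis using that by blast
qed

lemma edh_mono_simulation:
  assumes refl: "\<And>s. R s s"
    and sim: "\<And>s s' a \<pi> \<sigma>. R s s' \<Longrightarrow> applicable P1 a s \<pi> \<sigma> \<Longrightarrow>
       \<exists>a' \<sigma>'. simulating_step P2 S1 S2 R s s' a \<pi> \<sigma> a' \<sigma>'"
  shows "edh P1 S1 t \<le> edh P2 S2 t"
  unfolding edh_def
proof (rule SUP_least)
  fix T assume "T \<in> {T. chain_tree P1 T \<and> ct_term T [] = sharp t}"
  then have ct: "chain_tree P1 T" and "R (ct_term T []) (sharp t)" using refl by auto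
  from chain_tree_simulation[OF this sim]
  obtain T' where "chain_tree P2 T'" "ct_term T' [] = sharp t" "edl S1 T \<le> edl S2 T'" .
  then show "edl S1 T \<le> (SUP T \<in> {T. chain_tree P2 T \<and> ct_term T [] = sharp t}. edl S2 T)"
    by (intro SUP_upper2[of T']) auto
qed

lemma cplx_le_Omega: "x \<le> Omega"
  by (cases x) (auto simp: less_eq_cplx_def)

lemma iota_mono:
  assumes le: "\<And>n. f n \<le> g n"
  shows "iota f \<le> iota g"
proof -
  have bound: "eventually (\<lambda>n. g n \<le> h n) at_top \<Longrightarrow> eventually (\<lambda>n. f n \<le> h n) at_top" for h
    by (rule eventually_mono) (use le order_trans in blast)+
  have pol: "in_Pol g a \<Longrightarrow> in_Pol f a" for a unfolding in_Pol_def by (metis bound)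
  have "in_Exp g \<Longrightarrow> in_Exp f" "in_TwoExp g \<Longrightarrow> in_TwoExp f"
    unfolding in_Exp_def in_TwoExp_def by (metis bound)+
  moreover have "\<forall>n. g n \<noteq> top \<Longrightarrow> \<forall>n. f n \<noteq> top" using le by (metis top.extremum_unique)
  ultimately show ?thesis
  proof (cases "\<exists>a. in_Pol g a")
    case True
    then have "in_Pol f (LEAST a. in_Pol g a)" using pol LeastI_ex by blast
    then have "(LEAST a. in_Pol f a) \<le> (LEAST a. in_Pol g a)" and "\<exists>a. in_Pol f a"
      by (auto intro: Least_le)
    with True show ?thesis unfolding iota_def by (auto simp: less_eq_cplx_def)
  qed (auto simp: iota_def less_eq_cplx_def cplx_le_Omega)
qed

lemma iota_prob_mono:
  assumes "basic F P = basic F P'" and "\<And>t. edh P S t \<le> edh P' S' t"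
  shows "iota_prob F (P, S) \<le> iota_prob F (P', S')"
  unfolding iota_prob_def
  by (simp, rule iota_mono, rule SUP_mono) (use assms in auto)

text \<open>The second hypothesis suffices for the complement because well-formedness already bounds
  the complexity of P - S by the ancestors of the node.\<close>

lemma sound_output_single:
  assumes "iota_prob F (P, S) \<le> iota_prob F (P', S')"
    and "iota_prob F (P', P' - S') \<le> iota_prob F (P, P - S)"
  shows "sound_output F (P, S) c {(P', S')}"
  unfolding sound_output_def
proof (intro allI impI conjI)
  fix T v assume H: "proof_tree F T \<and> well_formed F T \<and> v \<in> pt_nodes T \<and> pt_LA T v = (P, S)"
  have "iota_prob F (P', S') \<le> Max (insert (pt_anc T v) (insert c (iota_prob F ` {(P', S')})))"
    by (rule Max_ge) auto
  with assms(1) show "iota_prob F (P, S) \<le> Max (insert (pt_anc T v) (insert c (iota_prob F ` {(P', S')})))"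
    by (rule order_trans)
  have "iota_prob F (P, P - S) \<le> pt_anc T v"
    using H unfolding well_formed_def by fastforce
  with assms(2) have "iota_prob F (P', P' - S') \<le> pt_anc T v" by (rule order_trans)
  then show "\<forall>(Pi, Si) \<in> {(P', S')}. iota_prob F (Pi, Pi - Si) \<le> max (pt_anc T v) c"
    by (simp add: le_max_iff_disj)
qed

lemma applicable_lhs_unannotated:
  "applicable P a s \<pi> \<sigma> \<Longrightarrow> flat (subst \<sigma> (adp_lhs a)) = subst \<sigma> (adp_lhs a)"
  unfolding applicable_def by (metis flat_flat)

lemma applicable_subst_unannotated:
  "applicable P a s \<pi> \<sigma> \<Longrightarrow> x \<in> vars (adp_lhs a) \<Longrightarrow> flat (\<sigma> x) = \<sigma> x"
  by (rule unannotated_subst_var[OF applicable_lhs_unannotated])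

lemma ann_sim_valid_pos: "ann_sim X s s' \<Longrightarrow> valid_pos s' p = valid_pos s p"
  by (metis ann_sim_def valid_pos_flat)

lemma applicable_transfer:
  assumes ap: "applicable P a s \<pi> \<sigma>" and S: "ann_sim X s s'" and "a' \<in> P'"
    and "subst \<sigma>' (adp_lhs a') = subst \<sigma> (adp_lhs a)" and "\<And>u. arg_NF P' u = arg_NF P u"
  shows "applicable P' a' s' \<pi> \<sigma>'"
proof -
  have v: "valid_pos s \<pi>" using ap by (simp add: applicable_def poss_def)
  then have v': "valid_pos s' \<pi>" using ann_sim_valid_pos[OF S] by simp
  have "flat (subt_at s' \<pi>) = flat (subt_at s \<pi>)"
    using subt_at_flat[OF v] subt_at_flat[OF v'] S by (simp add: ann_sim_def)
  with assms v' show ?thesis by (auto simp: applicable_def poss_def)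
qed

lemma ann_sim_False_ann_at: "ann_sim (\<lambda>_. False) s s' \<Longrightarrow> ann_at s p \<Longrightarrow> ann_at s' p"
  by (simp add: ann_sim_def)

text \<open>A subterm containing a redex is not a normal form.\<close>

lemma ann_sim_NF_ann_above_redex:
  assumes S: "ann_sim (NF P) s s'" and ap: "applicable P a s \<pi> \<sigma>"
    and p: "\<pi> = p @ q" and ann: "ann_at s p"
  shows "ann_at s' p"
proof (rule ccontr)
  assume "\<not> ann_at s' p"
  with S ann have "NF P (subt_at (flat s) p)" by (auto simp: ann_sim_def)
  moreover have v: "valid_pos s \<pi>" using ap by (simp add: applicable_def poss_def)
  then have "valid_pos (subt_at (flat s) p) q" using p valid_pos_append valid_pos_flat by blast
  ultimately have nf: "NF P (subt_at (flat s) \<pi>)" using p NF_subt_at subt_at_append by metis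
  from ap have a: "a \<in> P" and redex: "flat (subt_at s \<pi>) = subst \<sigma> (adp_lhs a)"
    by (simp_all add: applicable_def)
  have "flat (subt_at (flat s) \<pi>) \<noteq> subst \<sigma> (adp_lhs a)" by (rule NF_not_redex[OF nf a])
  then show False using redex subt_at_flat[OF v] flat_flat by metis
qed

definition ann_removed_at_NF :: "('f, 'v) adp set \<Rightarrow> ('f, 'v) trm \<Rightarrow> ('f, 'v) trm \<Rightarrow> bool" where
  "ann_removed_at_NF P s s' \<longleftrightarrow> ann_sim (NF P) s s' \<and> ann_sim (\<lambda>_. False) s' s"

lemma ann_removed_at_NF_refl: "ann_removed_at_NF P s s"
  by (simp add: ann_removed_at_NF_def ann_sim_refl)

lemma ann_removed_at_NF_ann_at_redex:
  assumes "ann_removed_at_NF P s s'" and "applicable P a s \<pi> \<sigma>"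
  shows "ann_at s' \<pi> = ann_at s \<pi>"
  using ann_sim_NF_ann_above_redex[of P s s' a \<pi> \<sigma> \<pi> "[]"] ann_sim_False_ann_at[of s' s \<pi>] assms
  unfolding ann_removed_at_NF_def by auto

lemma step_result_ann_removed_at_NF:
  assumes R: "ann_removed_at_NF P s s'" and ap: "applicable P a s \<pi> \<sigma>"
    and rhs: "ann_removed_at_NF P (subst \<sigma>1 (if ann_at s \<pi> then r else flat r))
                                  (subst \<sigma>2 (if ann_at s \<pi> then r' else flat r'))"
  shows "ann_removed_at_NF P (step_result s \<pi> \<sigma>1 m r) (step_result s' \<pi> \<sigma>2 m r')"
proof -
  have S: "ann_sim (NF P) s s'" and S': "ann_sim (\<lambda>_. False) s' s"
    using R by (simp_all add: ann_removed_at_NF_def)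
  have v: "valid_pos s \<pi>" using ap by (simp add: applicable_def poss_def)
  then have v': "valid_pos s' \<pi>" using ann_sim_valid_pos[OF S] by simp
  have ann: "ann_at s' \<pi> = ann_at s \<pi>" by (rule ann_removed_at_NF_ann_at_redex[OF R ap])
  have rhs1: "ann_sim (NF P) (subst \<sigma>1 (if ann_at s \<pi> then r else flat r))
      (subst \<sigma>2 (if ann_at s' \<pi> then r' else flat r'))"
    and rhs2: "ann_sim (\<lambda>_. False) (subst \<sigma>2 (if ann_at s' \<pi> then r' else flat r'))
      (subst \<sigma>1 (if ann_at s \<pi> then r else flat r))"
    using rhs ann by (simp_all add: ann_removed_at_NF_def)
  have "ann_sim (NF P) (step_result s \<pi> \<sigma>1 m r) (step_result s' \<pi> \<sigma>2 m r')"
    by (rule ann_sim_step_result[OF S v _ rhs1]) (rule ann_sim_NF_ann_above_redex[OF S ap])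
  moreover have "ann_sim (\<lambda>_. False) (step_result s' \<pi> \<sigma>2 m r') (step_result s \<pi> \<sigma>1 m r)"
    by (rule ann_sim_step_result[OF S' v' _ rhs2]) (rule ann_sim_False_ann_at[OF S'])
  ultimately show ?thesis by (simp add: ann_removed_at_NF_def)
qed

lemma step_result_more_ann:
  assumes "ann_sim (\<lambda>_. False) s s'" and "valid_pos s \<pi>"
    and "ann_sim (\<lambda>_. False) (subst \<sigma> (if ann_at s \<pi> then r else flat r))
                                (subst \<sigma>' (if ann_at s' \<pi> then r' else flat r'))"
  shows "ann_sim (\<lambda>_. False) (step_result s \<pi> \<sigma> m r) (step_result s' \<pi> \<sigma>' m r')"
  by (rule ann_sim_step_result[OF assms(1,2) _ assms(3)]) (rule ann_sim_False_ann_at[OF assms(1)])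

lemma simulating_step_ann_removed_at_NF:
  assumes R: "ann_removed_at_NF P s s'" and ap: "applicable P a s \<pi> \<sigma>"
    and a': "a' \<in> P'" and lhs: "subst \<sigma>' (adp_lhs a') = subst \<sigma> (adp_lhs a)"
    and arg_NF: "\<And>u. arg_NF P' u = arg_NF P u"
    and probs: "map fst (adp_rhs a') = map fst (adp_rhs a)" and flag: "adp_flag a' = adp_flag a"
    and rhs: "\<And>i. i < length (adp_rhs a) \<Longrightarrow>
      ann_removed_at_NF P (subst \<sigma> (if ann_at s \<pi> then snd (adp_rhs a ! i) else flat (snd (adp_rhs a ! i))))
        (subst \<sigma>' (if ann_at s \<pi> then snd (adp_rhs a' ! i) else flat (snd (adp_rhs a' ! i))))"
    and count: "a \<in> S \<Longrightarrow> ann_at s \<pi> \<Longrightarrow> a' \<in> S'"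
  shows "simulating_step P' S S' (ann_removed_at_NF P) s s' a \<pi> \<sigma> a' \<sigma>'"
  unfolding simulating_step_def
  using applicable_transfer[OF ap _ a' lhs arg_NF] R step_result_ann_removed_at_NF[OF R ap rhs]
    ann_removed_at_NF_ann_at_redex[OF R ap] probs flag count
  by (auto simp: ann_removed_at_NF_def)

lemma more_ann_contracted_rhs:
  assumes "ann_at s \<pi> \<Longrightarrow> ann_at s' \<pi>" and "\<And>x. x \<in> vars w \<Longrightarrow> flat (\<sigma> x) = \<sigma> x"
    and "flat w = flat w'" and "\<And>p. ann_at w p \<Longrightarrow> ann_at w' p"
  shows "ann_sim (\<lambda>_. False) (subst \<sigma> (if ann_at s \<pi> then w else flat w))
           (subst \<sigma> (if ann_at s' \<pi> then w' else flat w'))"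
proof (cases "ann_at s \<pi>")
  case True
  with assms show ?thesis by (intro ann_sim_subst_more_ann) auto
next
  case False
  have "vars w' = vars w" using assms(3) vars_flat by metis
  with False assms show ?thesis by (intro ann_sim_subst_more_ann) (auto simp: ann_at_unannotated)
qed

lemma simulating_step_more_ann:
  assumes R: "ann_sim (\<lambda>_. False) s s'" and ap: "applicable P a s \<pi> \<sigma>"
    and a': "a' \<in> P'" and lhs: "subst \<sigma>' (adp_lhs a') = subst \<sigma> (adp_lhs a)"
    and arg_NF: "\<And>u. arg_NF P' u = arg_NF P u"
    and probs: "map fst (adp_rhs a') = map fst (adp_rhs a)" and flag: "adp_flag a' = adp_flag a"
    and rhs: "\<And>i. i < length (adp_rhs a) \<Longrightarrow>
      ann_sim (\<lambda>_. False) (subst \<sigma> (if ann_at s \<pi> then snd (adp_rhs a ! i) else flat (snd (adp_rhs a ! i))))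
        (subst \<sigma>' (if ann_at s' \<pi> then snd (adp_rhs a' ! i) else flat (snd (adp_rhs a' ! i))))"
    and count: "a \<in> S \<Longrightarrow> ann_at s \<pi> \<Longrightarrow> a' \<in> S'"
  shows "simulating_step P' S S' (ann_sim (\<lambda>_. False)) s s' a \<pi> \<sigma> a' \<sigma>'"
proof -
  have "valid_pos s \<pi>" using ap by (simp add: applicable_def poss_def)
  with R rhs have "ann_sim (\<lambda>_. False) (step_result s \<pi> \<sigma> (adp_flag a) (snd (adp_rhs a ! i)))
      (step_result s' \<pi> \<sigma>' (adp_flag a') (snd (adp_rhs a' ! i)))" if "i < length (adp_rhs a)" for i
    using that flag by (auto intro: step_result_more_ann)
  with applicable_transfer[OF ap R a' lhs arg_NF] ann_sim_False_ann_at[OF R] probs count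
  show ?thesis unfolding simulating_step_def by blast
qed

definition lhs_instances :: "('f, 'v) adp set \<Rightarrow> ('f, 'v) adp set \<Rightarrow> bool" where
  "lhs_instances Q Q' \<longleftrightarrow>
     (\<forall>a \<in> Q. \<exists>a' \<in> Q'. is_TFun (adp_lhs a') \<and> (\<exists>\<delta>. adp_lhs a = subst \<delta> (adp_lhs a')))"

lemma NF_lhs_instances: "lhs_instances Q Q' \<Longrightarrow> NF Q' s \<Longrightarrow> NF Q s"
  unfolding lhs_instances_def NF_def by (metis subst_subst)

lemma defined_lhs_instances: "lhs_instances Q Q' \<Longrightarrow> defined Q \<subseteq> defined Q'"
  unfolding lhs_instances_def defined_def is_TFun_def
  by (fastforce dest!: bspec)

locale roi =
  fixes F :: "('f \<times> nat) set" and P P' S :: "('f, 'v) adp set"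
    and l :: "('f, 'v) trm" and rs :: "(real \<times> ('f, 'v) trm) list" and m :: bool
    and \<delta>s :: "('v \<Rightarrow> ('f, 'v) trm) list"
  assumes wf: "wf_problem F (P, S)"
    and P_eq: "P = insert (l, rs, m) P'" and not_in_P': "(l, rs, m) \<notin> P'"
begin

abbreviation \<alpha> :: "('f, 'v) adp" where "\<alpha> \<equiv> (l, rs, m)"
abbreviation N :: "('f, 'v) adp set" where "N \<equiv> roi_N P l rs m \<delta>s"
abbreviation P_roi :: "('f, 'v) adp set" where "P_roi \<equiv> P' \<union> N"
abbreviation S_roi :: "('f, 'v) adp set" where "S_roi \<equiv> roi_S S \<alpha> N"

definition inst_adp :: "('v \<Rightarrow> ('f, 'v) trm) \<Rightarrow> ('f, 'v) adp" where
  "inst_adp \<delta> = (subst \<delta> l, map (\<lambda>(p, r). (p, subst \<delta> r)) rs, m)"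

definition reann_adp :: "('f, 'v) adp" where
  "reann_adp = (l, map (\<lambda>(p, r). (p, sharp_pos (capt P l \<delta>s r) r)) rs, m)"

lemma N_eq: "N = inst_adp ` set \<delta>s \<union> {reann_adp}"
  by (simp add: roi_N_def inst_adp_def reann_adp_def)

lemma adp_sel [simp]:
  "adp_lhs \<alpha> = l" "adp_rhs \<alpha> = rs" "adp_flag \<alpha> = m"
  "adp_lhs (inst_adp \<delta>) = subst \<delta> l" "adp_rhs (inst_adp \<delta>) = map (\<lambda>(p, r). (p, subst \<delta> r)) rs"
  "adp_flag (inst_adp \<delta>) = m"
  "adp_lhs reann_adp = l" "adp_rhs reann_adp = map (\<lambda>(p, r). (p, sharp_pos (capt P l \<delta>s r) r)) rs"
  "adp_flag reann_adp = m"
  by (simp_all add: inst_adp_def reann_adp_def adp_lhs_def adp_rhs_def adp_flag_def)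

lemma wf_adps: "a \<in> P \<Longrightarrow> wf_adp F a"
  using wf by (simp add: wf_problem_def)

lemma rhs_vars: "a \<in> P \<Longrightarrow> (p, r) \<in> set (adp_rhs a) \<Longrightarrow> vars r \<subseteq> vars (adp_lhs a)"
  using wf_adps by (fastforce simp: wf_adp_def)

lemma l_TFun: "is_TFun l"
  using wf_adps[of \<alpha>] by (simp add: P_eq wf_adp_def)

lemma rs_vars: "i < length rs \<Longrightarrow> vars (snd (rs ! i)) \<subseteq> vars l"
  using rhs_vars[of \<alpha> "fst (rs ! i)" "snd (rs ! i)"] by (simp add: P_eq)

lemma nth_map_rhs: "i < length rs \<Longrightarrow> snd (map (\<lambda>(p, r). (p, f r)) rs ! i) = f (snd (rs ! i))"
  by (simp add: case_prod_beta)

lemma \<alpha>_in_P: "\<alpha> \<in> P"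
  by (simp add: P_eq)

lemma lhs_TFun: "a \<in> P \<Longrightarrow> is_TFun (adp_lhs a)"
  using wf_adps by (simp add: wf_adp_def)

lemma lhs_instances_P_roi: "lhs_instances P P_roi"
  unfolding lhs_instances_def
proof
  fix a assume a: "a \<in> P"
  show "\<exists>a' \<in> P_roi. is_TFun (adp_lhs a') \<and> (\<exists>\<delta>. adp_lhs a = subst \<delta> (adp_lhs a'))"
  proof (cases "a = \<alpha>")
    case True
    have "reann_adp \<in> P_roi" by (simp add: N_eq)
    with True l_TFun show ?thesis by (intro bexI[of _ reann_adp]) (simp_all add: exI[of _ TVar])
  next
    case False
    with a have "a \<in> P_roi" by (simp add: P_eq)
    with lhs_TFun[OF a] show ?thesis by (intro bexI[of _ a]) (simp_all add: exI[of _ TVar])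
  qed
qed

lemma lhs_instances_roi_P: "lhs_instances P_roi P"
  unfolding lhs_instances_def
proof
  fix a assume "a \<in> P_roi"
  then consider "a \<in> P'" | \<delta> where "a = inst_adp \<delta>" | "a = reann_adp" by (auto simp: N_eq)
  then show "\<exists>a' \<in> P. is_TFun (adp_lhs a') \<and> (\<exists>\<delta>. adp_lhs a = subst \<delta> (adp_lhs a'))"
  proof cases
    case 1
    then have "a \<in> P" by (simp add: P_eq)
    with lhs_TFun[OF this] show ?thesis by (intro bexI[of _ a]) (simp_all add: exI[of _ TVar])
  next
    case (2 \<delta>)
    with l_TFun show ?thesis by (intro bexI[of _ \<alpha>]) (auto simp: \<alpha>_in_P)
  next
    case 3
    with l_TFun show ?thesis by (intro bexI[of _ \<alpha>]) (simp_all add: \<alpha>_in_P exI[of _ TVar])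
  qed
qed

lemma NF_roi: "NF P_roi s = NF P s"
  using NF_lhs_instances lhs_instances_P_roi lhs_instances_roi_P by blast

lemma arg_NF_roi: "arg_NF P_roi s = arg_NF P s"
  by (simp add: arg_NF_def NF_roi)

lemma basic_roi: "basic F P_roi = basic F P"
proof -
  have "defined P_roi = defined P"
    using defined_lhs_instances lhs_instances_P_roi lhs_instances_roi_P by blast
  then show ?thesis by (simp add: basic_def fun_eq_iff)
qed

lemma P'_not_in_S_roi: "a \<in> P' \<Longrightarrow> a \<notin> S_roi \<Longrightarrow> a \<in> P - S"
  using not_in_P' by (auto simp: roi_S_def P_eq split: if_splits)

lemma N_not_in_S_roi: "a \<in> N \<Longrightarrow> a \<notin> S_roi \<Longrightarrow> \<alpha> \<in> P - S"
  by (auto simp: roi_S_def P_eq split: if_splits)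

lemma capt_subset_ann: "capt P l \<delta>s r \<subseteq> {p. ann_at r p}"
  by (auto simp: capt_def ann_subterm_at_def)

lemma ann_at_sharp_capt: "ann_at (sharp_pos (capt P l \<delta>s r) r) p \<longleftrightarrow> p \<in> capt P l \<delta>s r"
  by (rule ann_at_sharp_pos_subset[OF capt_subset_ann])

lemma ann_at_sharp_capt_ann: "ann_at (sharp_pos (capt P l \<delta>s r) r) p \<Longrightarrow> ann_at r p"
  using ann_at_sharp_capt capt_subset_ann by blast

subsection \<open>Every chain tree of P is simulated by one of the new problem\<close>

lemma simulate_P'_step:
  assumes R: "ann_removed_at_NF P s s'" and ap: "applicable P a s \<pi> \<sigma>" and a: "a \<in> P'"
  shows "simulating_step P_roi S S_roi (ann_removed_at_NF P) s s' a \<pi> \<sigma> a \<sigma>"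
  by (rule simulating_step_ann_removed_at_NF[OF R ap _ _ arg_NF_roi])
    (use a not_in_P' in \<open>auto simp: roi_S_def ann_removed_at_NF_refl\<close>)

lemma simulate_inst_step:
  assumes R: "ann_removed_at_NF P s s'" and ap: "applicable P \<alpha> s \<pi> \<sigma>"
    and \<delta>: "\<delta> \<in> set \<delta>s" and \<sigma>: "\<forall>x \<in> vars l. \<sigma> x = subst \<rho> (\<delta> x)"
  shows "simulating_step P_roi S S_roi (ann_removed_at_NF P) s s' \<alpha> \<pi> \<sigma> (inst_adp \<delta>) \<rho>"
proof (rule simulating_step_ann_removed_at_NF[OF R ap _ _ arg_NF_roi])
  have inst: "subst \<rho> (subst \<delta> w) = subst \<sigma> w" if "vars w \<subseteq> vars l" for w
    unfolding subst_subst using \<sigma> that by (intro subst_cong) auto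
  then show "subst \<rho> (adp_lhs (inst_adp \<delta>)) = subst \<sigma> (adp_lhs \<alpha>)" by simp
  have "flat (subst \<rho> (\<delta> x)) = subst \<rho> (\<delta> x)" if "x \<in> vars l" for x
    using applicable_subst_unannotated[OF ap, of x] \<sigma> that by simp
  then have \<delta>_un: "flat (\<delta> x) = \<delta> x" if "x \<in> vars l" for x using that unannotated_subst_inv by blast
  fix i assume "i < length (adp_rhs \<alpha>)"
  then have i: "i < length rs" by simp
  let ?r = "snd (rs ! i)"
  have "flat (subst \<delta> ?r) = subst \<delta> (flat ?r)"
    using rs_vars[OF i] \<delta>_un by (intro flat_subst_unannotated) auto
  then have eq: "subst \<rho> (if ann_at s \<pi> then subst \<delta> ?r else flat (subst \<delta> ?r)) =
      subst \<sigma> (if ann_at s \<pi> then ?r else flat ?r)"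
    using rs_vars[OF i] inst[of ?r] inst[of "flat ?r"] by simp
  show "ann_removed_at_NF P (subst \<sigma> (if ann_at s \<pi> then snd (adp_rhs \<alpha> ! i) else flat (snd (adp_rhs \<alpha> ! i))))
      (subst \<rho> (if ann_at s \<pi> then snd (adp_rhs (inst_adp \<delta>) ! i) else flat (snd (adp_rhs (inst_adp \<delta>) ! i))))"
    unfolding adp_sel nth_map_rhs[OF i] eq by (rule ann_removed_at_NF_refl)
qed (use \<delta> in \<open>simp_all add: N_eq roi_S_def case_prod_beta\<close>)

text \<open>Annotations of r that the reannotated rule drops are at positions not in capt, i.e. at
  captured subterms, which become normal forms under any \<sigma> that is not an instance of a \<delta>.\<close>

lemma ann_removed_at_NF_reann:
  assumes inf: "infinite (UNIV :: 'v set)"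
    and not_inst: "\<not> (\<exists>\<delta> \<in> set \<delta>s. \<exists>\<rho>. \<forall>x \<in> vars l. \<sigma> x = subst \<rho> (\<delta> x))"
    and nf: "arg_NF P (subst \<sigma> l)" and un: "flat (subst \<sigma> l) = subst \<sigma> l"
    and vr: "vars r \<subseteq> vars l"
  shows "ann_removed_at_NF P (subst \<sigma> r) (subst \<sigma> (sharp_pos (capt P l \<delta>s r) r))"
proof -
  have un_r: "\<And>x. x \<in> vars r \<Longrightarrow> flat (\<sigma> x) = \<sigma> x" using unannotated_subst_var[OF un] vr by blast
  have "ann_sim (NF P) (subst \<sigma> r) (subst \<sigma> (sharp_pos (capt P l \<delta>s r) r))"
  proof (rule ann_sim_subst)
    fix p assume p: "ann_at r p" "\<not> ann_at (sharp_pos (capt P l \<delta>s r) r) p"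
    then have "p \<notin> capt P l \<delta>s r" by (simp add: ann_at_sharp_capt)
    with p(1) have "captured P l (flat (subt_at r p)) \<delta>s" by (simp add: capt_def ann_subterm_at_def)
    moreover have v: "valid_pos r p" using p(1) by (simp add: ann_at_iff)
    then have "vars (flat (subt_at r p)) \<subseteq> vars l" using vars_subt_at vr by fastforce
    ultimately have "NF P (subst \<sigma> (flat (subt_at r p)))"
      using captured_subst_NF[OF inf _ not_inst nf un l_TFun] by simp
    then show "NF P (subst \<sigma> (subt_at (flat r) p))" by (simp add: subt_at_flat[OF v])
  qed (simp_all add: un_r)
  moreover have "ann_sim (\<lambda>_. False) (subst \<sigma> (sharp_pos (capt P l \<delta>s r) r)) (subst \<sigma> r)"
  proof (rule ann_sim_subst_more_ann)
    show "x \<in> vars (sharp_pos (capt P l \<delta>s r) r) \<Longrightarrow> flat (\<sigma> x) = \<sigma> x" for x using un_r by simp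
    show "ann_at (sharp_pos (capt P l \<delta>s r) r) p \<Longrightarrow> ann_at r p" for p
      by (rule ann_at_sharp_capt_ann)
  qed simp
  ultimately show ?thesis by (simp add: ann_removed_at_NF_def)
qed

lemma simulate_reann_step:
  assumes inf: "infinite (UNIV :: 'v set)"
    and R: "ann_removed_at_NF P s s'" and ap: "applicable P \<alpha> s \<pi> \<sigma>"
    and not_inst: "\<not> (\<exists>\<delta> \<in> set \<delta>s. \<exists>\<rho>. \<forall>x \<in> vars l. \<sigma> x = subst \<rho> (\<delta> x))"
  shows "simulating_step P_roi S S_roi (ann_removed_at_NF P) s s' \<alpha> \<pi> \<sigma> reann_adp \<sigma>"
proof (rule simulating_step_ann_removed_at_NF[OF R ap _ _ arg_NF_roi])
  have nf: "arg_NF P (subst \<sigma> l)" using ap by (simp add: applicable_def)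
  have un: "flat (subst \<sigma> l) = subst \<sigma> l" using applicable_lhs_unannotated[OF ap] by simp
  fix i assume "i < length (adp_rhs \<alpha>)"
  then have i: "i < length rs" by simp
  show "ann_removed_at_NF P (subst \<sigma> (if ann_at s \<pi> then snd (adp_rhs \<alpha> ! i) else flat (snd (adp_rhs \<alpha> ! i))))
      (subst \<sigma> (if ann_at s \<pi> then snd (adp_rhs reann_adp ! i) else flat (snd (adp_rhs reann_adp ! i))))"
    unfolding adp_sel nth_map_rhs[OF i]
    using ann_removed_at_NF_reann[OF inf not_inst nf un rs_vars[OF i]]
    by (cases "ann_at s \<pi>") (simp_all add: ann_removed_at_NF_refl)
qed (simp_all add: N_eq roi_S_def case_prod_beta)

lemma simulate_P_step:
  assumes "infinite (UNIV :: 'v set)"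
    and "ann_removed_at_NF P s s'" and "applicable P a s \<pi> \<sigma>"
  shows "\<exists>a' \<sigma>'. simulating_step P_roi S S_roi (ann_removed_at_NF P) s s' a \<pi> \<sigma> a' \<sigma>'"
proof (cases "a = \<alpha>")
  case True
  then show ?thesis
    using assms simulate_inst_step simulate_reann_step by metis
next
  case False
  then have "a \<in> P'" using assms(3) by (simp add: applicable_def P_eq)
  then show ?thesis using assms(2,3) simulate_P'_step by blast
qed

subsection \<open>Every chain tree of the new problem is simulated by one of P\<close>

lemma simulate_roi_P'_step:
  assumes R: "ann_sim (\<lambda>_. False) s s'" and ap: "applicable P_roi a s \<pi> \<sigma>" and a: "a \<in> P'"
  shows "simulating_step P (P_roi - S_roi) (P - S) (ann_sim (\<lambda>_. False)) s s' a \<pi> \<sigma> a \<sigma>"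
proof (rule simulating_step_more_ann[OF R ap _ _ arg_NF_roi[symmetric]])
  fix i assume "i < length (adp_rhs a)"
  then have "vars (snd (adp_rhs a ! i)) \<subseteq> vars (adp_lhs a)"
    using rhs_vars[of a] a by (simp add: P_eq) (metis nth_mem prod.collapse)
  then show "ann_sim (\<lambda>_. False) (subst \<sigma> (if ann_at s \<pi> then snd (adp_rhs a ! i) else flat (snd (adp_rhs a ! i))))
    (subst \<sigma> (if ann_at s' \<pi> then snd (adp_rhs a ! i) else flat (snd (adp_rhs a ! i))))"
    using applicable_subst_unannotated[OF ap] ann_sim_False_ann_at[OF R]
    by (intro more_ann_contracted_rhs) auto
qed (use a P'_not_in_S_roi in \<open>simp_all add: P_eq\<close>)

lemma simulate_roi_inst_step:
  assumes R: "ann_sim (\<lambda>_. False) s s'" and ap: "applicable P_roi (inst_adp \<delta>) s \<pi> \<sigma>"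
    and \<delta>: "\<delta> \<in> set \<delta>s"
  shows "simulating_step P (P_roi - S_roi) (P - S) (ann_sim (\<lambda>_. False)) s s' (inst_adp \<delta>) \<pi> \<sigma>
           \<alpha> (\<lambda>x. subst \<sigma> (\<delta> x))"
proof (rule simulating_step_more_ann[OF R ap _ _ arg_NF_roi[symmetric]])
  have un: "flat (\<sigma> x) = \<sigma> x" if "x \<in> vars (subst \<delta> l)" for x
    using applicable_subst_unannotated[OF ap] that by simp
  have "flat (subst (\<lambda>x. subst \<sigma> (\<delta> x)) l) = subst (\<lambda>x. subst \<sigma> (\<delta> x)) l"
    using applicable_lhs_unannotated[OF ap] by (simp add: subst_subst)
  then have "flat (subst \<sigma> (\<delta> x)) = subst \<sigma> (\<delta> x)" if "x \<in> vars l" for x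
    using that unannotated_subst_var by fastforce
  then have \<delta>_un: "flat (\<delta> x) = \<delta> x" if "x \<in> vars l" for x using that unannotated_subst_inv by blast
  fix i assume "i < length (adp_rhs (inst_adp \<delta>))"
  then have i: "i < length rs" by simp
  let ?r = "snd (rs ! i)"
  have "vars (subst \<delta> ?r) \<subseteq> vars (subst \<delta> l)" using rs_vars[OF i] by (auto simp: vars_subst)
  then have sim: "ann_sim (\<lambda>_. False)
      (subst \<sigma> (if ann_at s \<pi> then subst \<delta> ?r else flat (subst \<delta> ?r)))
      (subst \<sigma> (if ann_at s' \<pi> then subst \<delta> ?r else flat (subst \<delta> ?r)))"
    using un ann_sim_False_ann_at[OF R] by (intro more_ann_contracted_rhs) auto
  have "flat (subst \<delta> ?r) = subst \<delta> (flat ?r)"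
    using \<delta>_un rs_vars[OF i] by (intro flat_subst_unannotated) auto
  then have "subst (\<lambda>x. subst \<sigma> (\<delta> x)) (if ann_at s' \<pi> then ?r else flat ?r) =
      subst \<sigma> (if ann_at s' \<pi> then subst \<delta> ?r else flat (subst \<delta> ?r))"
    by (simp add: subst_subst)
  then show "ann_sim (\<lambda>_. False)
    (subst \<sigma> (if ann_at s \<pi> then snd (adp_rhs (inst_adp \<delta>) ! i) else flat (snd (adp_rhs (inst_adp \<delta>) ! i))))
    (subst (\<lambda>x. subst \<sigma> (\<delta> x)) (if ann_at s' \<pi> then snd (adp_rhs \<alpha> ! i) else flat (snd (adp_rhs \<alpha> ! i))))"
    unfolding adp_sel nth_map_rhs[OF i] using sim by (simp only:)
qed (use \<delta> N_not_in_S_roi[of "inst_adp \<delta>"] in \<open>simp_all add: \<alpha>_in_P subst_subst N_eq case_prod_beta\<close>)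

lemma simulate_roi_reann_step:
  assumes R: "ann_sim (\<lambda>_. False) s s'" and ap: "applicable P_roi reann_adp s \<pi> \<sigma>"
  shows "simulating_step P (P_roi - S_roi) (P - S) (ann_sim (\<lambda>_. False)) s s' reann_adp \<pi> \<sigma> \<alpha> \<sigma>"
proof (rule simulating_step_more_ann[OF R ap _ _ arg_NF_roi[symmetric]])
  fix i assume "i < length (adp_rhs reann_adp)"
  then have i: "i < length rs" by simp
  let ?r = "snd (rs ! i)" and ?C = "capt P l \<delta>s (snd (rs ! i))"
  have "ann_sim (\<lambda>_. False) (subst \<sigma> (if ann_at s \<pi> then sharp_pos ?C ?r else flat (sharp_pos ?C ?r)))
      (subst \<sigma> (if ann_at s' \<pi> then ?r else flat ?r))"
  proof (rule more_ann_contracted_rhs)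
    show "ann_at s \<pi> \<Longrightarrow> ann_at s' \<pi>" by (rule ann_sim_False_ann_at[OF R])
    show "x \<in> vars (sharp_pos ?C ?r) \<Longrightarrow> flat (\<sigma> x) = \<sigma> x" for x
      using applicable_subst_unannotated[OF ap, of x] rs_vars[OF i] by auto
    show "ann_at (sharp_pos ?C ?r) p \<Longrightarrow> ann_at ?r p" for p
      by (rule ann_at_sharp_capt_ann)
  qed simp
  then show "ann_sim (\<lambda>_. False)
    (subst \<sigma> (if ann_at s \<pi> then snd (adp_rhs reann_adp ! i) else flat (snd (adp_rhs reann_adp ! i))))
    (subst \<sigma> (if ann_at s' \<pi> then snd (adp_rhs \<alpha> ! i) else flat (snd (adp_rhs \<alpha> ! i))))"
    unfolding adp_sel nth_map_rhs[OF i] .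
qed (use N_not_in_S_roi[of reann_adp] in \<open>simp_all add: \<alpha>_in_P N_eq case_prod_beta\<close>)

lemma simulate_P_roi_step:
  assumes "ann_sim (\<lambda>_. False) s s'" and "applicable P_roi a s \<pi> \<sigma>"
  shows "\<exists>a' \<sigma>'. simulating_step P (P_roi - S_roi) (P - S) (ann_sim (\<lambda>_. False)) s s' a \<pi> \<sigma> a' \<sigma>'"
proof -
  from assms(2) consider "a \<in> P'" | \<delta> where "\<delta> \<in> set \<delta>s" "a = inst_adp \<delta>" | "a = reann_adp"
    by (auto simp: applicable_def N_eq)
  then show ?thesis
    using simulate_roi_P'_step simulate_roi_inst_step simulate_roi_reann_step assms by cases blast+
qed

theorem roi_sound:
  assumes "infinite (UNIV :: 'v set)"
  shows "sound_output F (P, S) c {(P_roi, S_roi)}"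
proof (rule sound_output_single)
  show "iota_prob F (P, S) \<le> iota_prob F (P_roi, S_roi)"
    using simulate_P_step[OF assms]
    by (intro iota_prob_mono basic_roi[symmetric] edh_mono_simulation[OF ann_removed_at_NF_refl])
  show "iota_prob F (P_roi, P_roi - S_roi) \<le> iota_prob F (P, P - S)"
    using simulate_P_roi_step
    by (intro iota_prob_mono basic_roi edh_mono_simulation[OF ann_sim_refl])
qed

end

theorem mainTheorem9:
  fixes F :: "('f \<times> nat) set"
    and P P' S :: "('f, 'v) adp set"
    and l :: "('f, 'v) trm" and rs :: "(real \<times> ('f, 'v) trm) list" and m :: bool
    and j :: nat and t :: "('f, 'v) trm" and \<delta>s :: "('v \<Rightarrow> ('f, 'v) trm) list"
  assumes "infinite (UNIV :: 'v set)"
    and "finite F"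
    and "wf_problem F (P, S)"
    and "P = insert (l, rs, m) P'" and "(l, rs, m) \<notin> P'"
    and "j < length rs"
    and "ann_subterm t (snd (rs ! j))"
    and "\<forall>\<delta> \<in> set \<delta>s. narrowing_subst P l t \<delta>"
    and "captured P l t \<delta>s"
  shows "sound_output F (P, S) (Pol 0)
           {(P' \<union> roi_N P l rs m \<delta>s, roi_S S (l, rs, m) (roi_N P l rs m \<delta>s))}"
proof -
  interpret roi F P P' S l rs m \<delta>s
    using assms(3-5) by unfold_locales
  show ?thesis by (rule roi_sound[OF assms(1)])
qed

end
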